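(* There is a constant $c$ independent of $n$ such that for all integers $n\ge2$ the operator norms of $\mathcal L_n$ and $\mathcal L_n^*$, as operators $C(\triangle_H)\to C(\triangle_H)$ with the uniform norm, satisfy $$\|\mathcal L_n\|\le c(\log n)^3\qquad\text{and}\qquad\|\mathcal L_n^*\|\le c(\log n)^3.$$
   Context: Let $\mathbb R^4_H=\{\mathbf t\in\mathbb R^4: t_1+t_2+t_3+t_4=0\}$, $\mathbb Z^4_H=\mathbb Z^4\cap\mathbb R^4_H$, $\mathbb H=\{\mathbf k\in\mathbb Z^4_H: k_1\equiv k_2\equiv k_3\equiv k_4\pmod4\}$, $\phi_{\mathbf k}(\mathbf t)=e^{\frac{\pi i}{2}\mathbf k\cdot\mathbf t}$. Let $\mathcal G=S_4$ act on $\mathbf t$ by permuting coordinates, $\mathbf t\mapsto\mathbf t\sigma$, with sign $\operatorname{sgn}\sigma$; $\mathsf{TC}_{\mathbf k}(\mathbf t)=\frac1{24}\sum_\sigma\phi_{\mathbf k}(\mathbf t\sigma)$, $\mathsf{TS}_{\mathbf k}(\mathbf t)=-\frac1{24}\sum_\sigma\operatorname{sgn}(\sigma)\phi_{\mathbf k}(\mathbf t\sigma)$. Let $\triangle_H=\{\mathbf t\in\mathbb R^4_H: t_1-t_2,\,t_2-t_3,\,t_3-t_4,\,t_1-t_4\in[0,1]\}$, $\Lambda_n=\{\mathbf k\in\mathbb H: k_4\le k_3\le k_2\le k_1\le k_4+4n\}$, $\Lambda_n^\circ=\{\mathbf k\in\mathbb H: k_4<k_3<k_2<k_1<k_4+4n\}$.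 For $\mathbf j\in\Lambda_n$ with relations (a) $j_1=j_2$, (b) $j_2=j_3$, (c) $j_3=j_4$, (d) $j_1=j_4+4n$: $\lambda^{(n)}_{\mathbf j}=24$ if none holds, $12$ if exactly one, $6$ if exactly $\{(a),(c)\}$ or $\{(b),(d)\}$ hold, $4$ if exactly two other ones hold, $1$ if three hold. For $f\in C(\triangle_H)$: $\mathcal L_nf(\mathbf t)=\sum_{\mathbf j\in\Lambda_n^\circ}f(\tfrac{\mathbf j}{4n})\frac{144}{n^3}\sum_{\mathbf k\in\Lambda_n^\circ}\mathsf{TS}_{\mathbf k}(\mathbf t)\overline{\mathsf{TS}_{\mathbf k}(\tfrac{\mathbf j}{4n})}$ and $\mathcal L_n^*f(\mathbf t)=\sum_{\mathbf j\in\Lambda_n}f(\tfrac{\mathbf j}{4n})\frac{\lambda^{(n)}_{\mathbf j}}{4n^3}\sum_{\mathbf k\in\Lambda_n}\lambda^{(n)}_{\mathbf k}\mathsf{TC}_{\mathbf k}(\mathbf t)\overline{\mathsf{TC}_{\mathbf k}(\tfrac{\mathbf j}{4n})}$. *)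

theory Defs
  imports "HOL-Analysis.Analysis" "HOL-Combinatorics.Permutations"
begin

definition dotk :: "int^4 \<Rightarrow> real^4 \<Rightarrow> real" where
  "dotk k t = (\<Sum>i\<in>UNIV. real_of_int (k$i) * t$i)"

definition phi :: "int^4 \<Rightarrow> real^4 \<Rightarrow> complex" where
  "phi k t = exp (\<i> * complex_of_real (pi / 2 * dotk k t))"

definition permv :: "(4 \<Rightarrow> 4) \<Rightarrow> real^4 \<Rightarrow> real^4" where
  "permv \<sigma> t = (\<chi> i. t $ \<sigma> i)"

definition TC :: "int^4 \<Rightarrow> real^4 \<Rightarrow> complex" where
  "TC k t = (1/24) * (\<Sum>\<sigma>\<in>{\<sigma>. \<sigma> permutes (UNIV::4 set)}. phi k (permv \<sigma> t))"

definition TS :: "int^4 \<Rightarrow> real^4 \<Rightarrow> complex" where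
  "TS k t = -(1/24) * (\<Sum>\<sigma>\<in>{\<sigma>. \<sigma> permutes (UNIV::4 set)}.
              of_int (sign \<sigma>) * phi k (permv \<sigma> t))"

definition HH :: "(int^4) set" where
  "HH = {k. k$1 + k$2 + k$3 + k$4 = 0 \<and>
            k$1 mod 4 = k$2 mod 4 \<and> k$2 mod 4 = k$3 mod 4 \<and> k$3 mod 4 = k$4 mod 4}"

definition triH :: "(real^4) set" where
  "triH = {t. t$1 + t$2 + t$3 + t$4 = 0 \<and>
             t$1 - t$2 \<in> {0..1} \<and> t$2 - t$3 \<in> {0..1} \<and> t$3 - t$4 \<in> {0..1} \<and>
             t$1 - t$4 \<in> {0..1}}"

definition Lam :: "nat \<Rightarrow> (int^4) set" where
  "Lam n = {k \<in> HH. k$4 \<le> k$3 \<and> k$3 \<le> k$2 \<and> k$2 \<le> k$1 \<and> k$1 \<le> k$4 + 4 * int n}"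

definition Lam_int :: "nat \<Rightarrow> (int^4) set" where
  "Lam_int n = {k \<in> HH. k$4 < k$3 \<and> k$3 < k$2 \<and> k$2 < k$1 \<and> k$1 < k$4 + 4 * int n}"

text \<open>The weights lambda^(n)_j. Relations (a) j1=j2, (b) j2=j3, (c) j3=j4,
  (d) j1 = j4+4n. The case of all four holding (only possible for n=0) is
  irrelevant and given the value 1.\<close>
definition lam :: "nat \<Rightarrow> int^4 \<Rightarrow> real" where
  "lam n j = (let ra = (j$1 = j$2); rb = (j$2 = j$3); rc = (j$3 = j$4);
                  rd = (j$1 = j$4 + 4 * int n);
                  cnt = card {i::nat. (i = 0 \<and> ra) \<or> (i = 1 \<and> rb) \<or> (i = 2 \<and> rc) \<or> (i = 3 \<and> rd)}
              in if cnt = 0 then 24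
                 else if cnt = 1 then 12
                 else if cnt = 2 then (if (ra \<and> rc) \<or> (rb \<and> rd) then 6 else 4)
                 else 1)"

definition scalept :: "nat \<Rightarrow> int^4 \<Rightarrow> real^4" where
  "scalept n j = (\<chi> i. real_of_int (j$i) / (4 * real n))"

definition LL :: "nat \<Rightarrow> (real^4 \<Rightarrow> complex) \<Rightarrow> real^4 \<Rightarrow> complex" where
  "LL n f t = (\<Sum>j\<in>Lam_int n. f (scalept n j) * (144 / (of_nat n)^3) *
                 (\<Sum>k\<in>Lam_int n. TS k t * cnj (TS k (scalept n j))))"

definition LLstar :: "nat \<Rightarrow> (real^4 \<Rightarrow> complex) \<Rightarrow> real^4 \<Rightarrow> complex" where
  "LLstar n f t = (\<Sum>j\<in>Lam n. f (scalept n j) * (of_real (lam n j) / (4 * (of_nat n)^3)) *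
                 (\<Sum>k\<in>Lam n. of_real (lam n k) * TC k t * cnj (TC k (scalept n j))))"

end

theory Submission
  imports Defs "HOL-Analysis.Harmonic_Numbers"
begin

text \<open>Both kernels are \<open>S\<^sub>4\<close>-symmetrisations of exponential sums over a simplex of frequencies.
  Averaging over the orbits of \<open>S\<^sub>4\<close>, the simplex (with the boundary weights \<open>lam n\<close>) may be
  replaced by four boxes, on each of which the exponential sum factorises into three one-dimensional
  geometric sums. Three coordinates of a lattice point determine the fourth, so summing such a
  product over the interpolation nodes costs at most the product of three one-dimensional sums over
  a grid, and each of these is \<open>O(n log n)\<close> by the Dirichlet-kernel bound \<open>1/|sin \<pi>x|\<close>.
  The normalisation \<open>n\<^sup>-\<^sup>3\<close> of the operators leaves \<open>O((log n)\<^sup>3)\<close>.\<close>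

definition perm4 :: "4 \<Rightarrow> 4 \<Rightarrow> 4 \<Rightarrow> 4 \<Rightarrow> 4 \<Rightarrow> 4" where
  "perm4 a b c d = (\<lambda>x. if x = 1 then a else if x = 2 then b else if x = 3 then c else d)"

lemma distinct_1234: "distinct [1,2,3,4::4]"
proof (rule card_distinct)
  have "set [1,2,3,4::4] = UNIV" using UNIV_4 by simp
  then show "card (set [1,2,3,4::4]) = length [1,2,3,4::4]" by simp
qed

lemma neq_4: "(1::4) \<noteq> 2" "(1::4) \<noteq> 3" "(1::4) \<noteq> 4" "(2::4) \<noteq> 3" "(2::4) \<noteq> 4" "(3::4) \<noteq> 4"
  using distinct_1234 by auto

lemma perm4_simps [simp]:
  "perm4 a b c d 1 = a" "perm4 a b c d 2 = b" "perm4 a b c d 3 = c" "perm4 a b c d 4 = d"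
  using neq_4 by (auto simp: perm4_def)

lemma perm4_eq_iff: "perm4 a b c d = perm4 a' b' c' d' \<longleftrightarrow> a = a' \<and> b = b' \<and> c = c' \<and> d = d'"
  by (metis perm4_simps)

lemma UNIV_4_eq_distinct: "distinct [a,b,c,d::4] \<Longrightarrow> (UNIV::4 set) = {a,b,c,d}"
  using card_subset_eq[of "UNIV::4 set" "{a,b,c,d}"] by (simp add: card_insert_if)

lemma sum_UNIV_4_distinct: "distinct [a,b,c,d::4] \<Longrightarrow> sum f UNIV = f a + f b + f c + f d"
  by (simp add: UNIV_4_eq_distinct add.assoc)

lemma all_4_distinct: "distinct [a,b,c,d::4] \<Longrightarrow> (\<forall>j. P j) \<longleftrightarrow> P a \<and> P b \<and> P c \<and> P d"
  using UNIV_4_eq_distinct by (metis UNIV_I insertE singletonD)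

lemma exists_fourth_index: "distinct [a,b,c::4] \<Longrightarrow> \<exists>w. distinct [a,b,c,w]"
proof -
  assume d: "distinct [a,b,c]"
  then have "card {a,b,c} = 3" by auto
  moreover have "card (UNIV::4 set) = 4" by simp
  ultimately have "{a,b,c} \<noteq> (UNIV::4 set)" by auto
  then obtain w where "w \<notin> {a,b,c}" by auto
  then show ?thesis using d by auto
qed

lemma perm4_permutes: "distinct [a,b,c,d] \<Longrightarrow> perm4 a b c d permutes UNIV"
proof -
  assume d: "distinct [a,b,c,d]"
  have "inj_on (perm4 a b c d) {1,2,3,4}"
    using d neq_4 by (simp add: inj_on_def) blast
  then have i: "inj (perm4 a b c d)" unfolding UNIV_4 .
  then have "bij (perm4 a b c d)" by (simp add: bij_def finite_UNIV_inj_surj)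
  then show ?thesis by (rule bij_imp_permutes) simp
qed

definition perms4 :: "(4 \<Rightarrow> 4) list" where
 "perms4 = [perm4 1 2 3 4, perm4 1 2 4 3, perm4 1 3 2 4, perm4 1 3 4 2, perm4 1 4 2 3, perm4 1 4 3 2,
           perm4 2 1 3 4, perm4 2 1 4 3, perm4 2 3 1 4, perm4 2 3 4 1, perm4 2 4 1 3, perm4 2 4 3 1,
           perm4 3 1 2 4, perm4 3 1 4 2, perm4 3 2 1 4, perm4 3 2 4 1, perm4 3 4 1 2, perm4 3 4 2 1,
           perm4 4 1 2 3, perm4 4 1 3 2, perm4 4 2 1 3, perm4 4 2 3 1, perm4 4 3 1 2, perm4 4 3 2 1]"

lemma distinct_perms4: "distinct perms4"
  unfolding perms4_def by (simp add: perm4_eq_iff neq_4 neq_4[symmetric])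

lemma card_permutations_4: "card {\<sigma>. \<sigma> permutes (UNIV::4 set)} = 24"
  using card_permutations[of "UNIV::4 set"] by (simp add: fact_numeral)

lemma permutations_4_eq: "{\<sigma>. \<sigma> permutes (UNIV::4 set)} = set perms4"
proof (rule card_subset_eq[symmetric])
  show "finite {\<sigma>. \<sigma> permutes (UNIV::4 set)}" by (simp add: finite_permutations)
  show "set perms4 \<subseteq> {\<sigma>. \<sigma> permutes (UNIV::4 set)}"
    unfolding perms4_def by (auto intro!: perm4_permutes simp: neq_4 neq_4[symmetric])
  show "card (set perms4) = card {\<sigma>. \<sigma> permutes (UNIV::4 set)}"
    using distinct_perms4 distinct_card by (simp add: card_permutations_4 perms4_def)
qed

lemma sum_permutations_4:
  "(\<Sum>\<sigma>\<in>{\<sigma>. \<sigma> permutes (UNIV::4 set)}. g \<sigma>) = sum_list (map g perms4)"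
  by (simp add: permutations_4_eq sum.distinct_set_conv_list distinct_perms4)

definition permi :: "(4 \<Rightarrow> 4) \<Rightarrow> int^4 \<Rightarrow> int^4" where
  "permi \<sigma> k = (\<chi> i. k $ \<sigma> i)"

lemma permi_nth [simp]: "permi \<sigma> k $ i = k $ \<sigma> i"
  by (simp add: permi_def)

lemma permv_nth [simp]: "permv \<sigma> t $ i = t $ \<sigma> i"
  by (simp add: permv_def)

lemma permi_comp: "permi \<sigma> (permi \<tau> k) = permi (\<tau> \<circ> \<sigma>) k"
  by (simp add: vec_eq_iff)

lemma permi_inv: "\<sigma> permutes UNIV \<Longrightarrow> permi \<sigma> (permi (inv \<sigma>) k) = k"
  "\<sigma> permutes UNIV \<Longrightarrow> permi (inv \<sigma>) (permi \<sigma> k) = k"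
  by (simp_all add: vec_eq_iff permutes_inverses)

lemma phi_permi:
  assumes "\<pi> permutes UNIV"
  shows "phi (permi \<pi> k) (permv \<sigma> t) = phi k (permv (\<sigma> \<circ> inv \<pi>) t)"
proof -
  have "dotk (permi \<pi> k) (permv \<sigma> t) = dotk k (permv (\<sigma> \<circ> inv \<pi>) t)"
    unfolding dotk_def
    by (subst sum.permute[OF assms]) (simp add: o_def permutes_inverses[OF assms])
  then show ?thesis by (simp add: phi_def)
qed

lemma TC_permi:
  assumes "\<pi> permutes UNIV"
  shows "TC (permi \<pi> k) t = TC k t"
proof -
  have "(\<Sum>\<sigma>\<in>{\<sigma>. \<sigma> permutes UNIV}. phi (permi \<pi> k) (permv \<sigma> t))
      = (\<Sum>\<sigma>\<in>{\<sigma>. \<sigma> permutes UNIV}. phi k (permv (\<sigma> \<circ> inv \<pi>) t))"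
    by (simp add: phi_permi assms)
  also have "\<dots> = (\<Sum>\<sigma>\<in>{\<sigma>. \<sigma> permutes UNIV}. phi k (permv \<sigma> t))"
    by (rule sum_permutations_compose_right[symmetric, where f = "\<lambda>\<sigma>. phi k (permv \<sigma> t)"])
       (rule permutes_inv[OF assms])
  finally show ?thesis by (simp add: TC_def)
qed

lemma TS_permi:
  assumes "\<pi> permutes UNIV"
  shows "TS (permi \<pi> k) t = of_int (sign \<pi>) * TS k t"
proof -
  have pp: "permutation \<pi>" by (rule permutes_imp_permutation[OF _ assms]) simp
  have "(\<Sum>\<sigma>\<in>{\<sigma>. \<sigma> permutes UNIV}. of_int (sign \<sigma>) * phi (permi \<pi> k) (permv \<sigma> t))
      = (\<Sum>\<sigma>\<in>{\<sigma>. \<sigma> permutes UNIV}. of_int (sign \<sigma>) * phi k (permv (\<sigma> \<circ> inv \<pi>) t))"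
    by (simp add: phi_permi assms)
  also have "\<dots> = (\<Sum>\<sigma>\<in>{\<sigma>. \<sigma> permutes UNIV}.
      of_int (sign (\<sigma> \<circ> \<pi>)) * phi k (permv (\<sigma> \<circ> \<pi> \<circ> inv \<pi>) t))"
    by (rule sum_permutations_compose_right[OF assms])
  also have "\<dots> = (\<Sum>\<sigma>\<in>{\<sigma>. \<sigma> permutes UNIV}. of_int (sign \<pi>) * (of_int (sign \<sigma>) * phi k (permv \<sigma> t)))"
  proof (rule sum.cong[OF refl])
    fix \<sigma> assume "\<sigma> \<in> {\<sigma>. \<sigma> permutes (UNIV::4 set)}"
    then have sp: "permutation \<sigma>" by (intro permutes_imp_permutation[of UNIV]) simp_all
    have "\<sigma> \<circ> \<pi> \<circ> inv \<pi> = \<sigma>" by (simp add: o_assoc[symmetric] permutes_inv_o[OF assms])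
    then show "of_int (sign (\<sigma> \<circ> \<pi>)) * phi k (permv (\<sigma> \<circ> \<pi> \<circ> inv \<pi>) t) =
         of_int (sign \<pi>) * (of_int (sign \<sigma>) * phi k (permv \<sigma> t))"
      by (simp add: sign_compose[OF sp pp])
  qed
  finally show ?thesis
    by (simp add: TS_def sum_distrib_left[symmetric])
qed

lemma TS_eq_0_if_coords_eq:
  assumes "k $ p = k $ q" "p \<noteq> q"
  shows "TS k t = 0"
proof -
  have tp: "Transposition.transpose p q permutes UNIV" by (rule permutes_swap_id) auto
  have "permi (Transposition.transpose p q) k = k" using assms
    by (auto simp: vec_eq_iff Transposition.transpose_def)
  then have "TS k t = - TS k t"
    using TS_permi[OF tp, of k t] assms by (simp add: sign_swap_id)
  then show ?thesis by simp
qed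

lemma of_int_sign_mult_self: "(of_int (sign \<pi>) :: complex) * of_int (sign \<pi>) = 1"
  by (simp add: sign_def)

section \<open>Symmetrisation of the kernels\<close>

definition HH_box :: "nat \<Rightarrow> (int^4) set" where
  "HH_box n = {k \<in> HH. \<forall>i. \<bar>k$i\<bar> \<le> 4 * int n}"

lemma HH_iff: "k \<in> HH \<longleftrightarrow> sum (\<lambda>i. k$i) UNIV = 0 \<and> (\<forall>i j. k$i mod 4 = k$j mod 4)"
  unfolding HH_def sum_4 by (auto simp: forall_4)

lemma HH_box_permi: "\<sigma> permutes UNIV \<Longrightarrow> k \<in> HH_box n \<Longrightarrow> permi \<sigma> k \<in> HH_box n"
  unfolding HH_box_def HH_iff
  by (simp add: sum.permute[of \<sigma> UNIV "\<lambda>i. k$i", simplified] o_def)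

lemma HH_box_coord_bound: "k \<in> HH_box n \<Longrightarrow> k$i \<in> {-4 * int n..4 * int n}"
proof -
  assume "k \<in> HH_box n"
  then have "\<bar>k$i\<bar> \<le> 4 * int n" by (simp add: HH_box_def)
  then show ?thesis by (simp add: abs_le_iff)
qed

lemma finite_HH_box: "finite (HH_box n)"
proof -
  let ?N = "4 * int n"
  have "HH_box n \<subseteq> (\<lambda>f. \<chi> i. f i) ` (PiE UNIV (\<lambda>_. {-?N..?N}))"
  proof
    fix k assume "k \<in> HH_box n"
    then have "(\<lambda>i. k$i) \<in> PiE UNIV (\<lambda>_. {-?N..?N})" using HH_box_coord_bound by auto
    then show "k \<in> (\<lambda>f. \<chi> i. f i) ` (PiE UNIV (\<lambda>_. {-?N..?N}))"
      by (rule image_eqI[rotated]) simp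
  qed
  then show ?thesis by (rule finite_subset) (intro finite_imageI finite_PiE; simp)
qed

lemma Lam_subset_HH_box: "Lam n \<subseteq> HH_box n"
proof
  fix k assume k: "k \<in> Lam n"
  then have h: "k \<in> HH" and o: "k$4 \<le> k$3" "k$3 \<le> k$2" "k$2 \<le> k$1" "k$1 \<le> k$4 + 4 * int n"
    by (auto simp: Lam_def)
  have s: "k$1 + k$2 + k$3 + k$4 = 0" using h by (simp add: HH_def)
  have "\<forall>i. \<bar>k$i\<bar> \<le> 4 * int n"
    unfolding forall_4 abs_le_iff using o s by (intro conjI; linarith)
  then show "k \<in> HH_box n" using h by (simp add: HH_box_def)
qed

lemma Lam_int_subset_Lam: "Lam_int n \<subseteq> Lam n"
  by (auto simp: Lam_int_def Lam_def)

lemma sum_permi_reindex: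
  assumes "\<sigma> permutes UNIV" "\<And>\<sigma> k. \<sigma> permutes UNIV \<Longrightarrow> k \<in> Q \<Longrightarrow> permi \<sigma> k \<in> Q"
  shows "(\<Sum>k\<in>Q. h (permi \<sigma> k)) = (\<Sum>k\<in>Q. h k)"
  using assms permutes_inv[OF assms(1)]
  by (intro sum.reindex_bij_witness[of Q "permi (inv \<sigma>)" "permi \<sigma>"]) (simp_all add: permi_inv)

text \<open>Averaging both sides over the orbits of \<open>S\<^sub>4\<close> shows that only the orbit sums of the
  weights matter.\<close>

lemma sum_mult_eq_if_orbit_sums_eq:
  fixes F G B :: "int^4 \<Rightarrow> complex"
  assumes fin: "finite Q"
    and closed: "\<And>\<sigma> k. \<sigma> permutes UNIV \<Longrightarrow> k \<in> Q \<Longrightarrow> permi \<sigma> k \<in> Q"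
    and inv: "\<And>\<sigma> k. \<sigma> permutes UNIV \<Longrightarrow> k \<in> Q \<Longrightarrow> B (permi \<sigma> k) = B k"
    and orbit: "\<And>k. k \<in> Q \<Longrightarrow> B k \<noteq> 0 \<Longrightarrow>
       (\<Sum>\<sigma>\<in>{\<sigma>. \<sigma> permutes UNIV}. F (permi \<sigma> k)) = (\<Sum>\<sigma>\<in>{\<sigma>. \<sigma> permutes UNIV}. G (permi \<sigma> k))"
  shows "(\<Sum>k\<in>Q. F k * B k) = (\<Sum>k\<in>Q. G k * B k)"
proof -
  let ?P = "{\<sigma>. \<sigma> permutes (UNIV::4 set)}"
  have average: "24 * (\<Sum>k\<in>Q. H k * B k) = (\<Sum>k\<in>Q. (\<Sum>\<sigma>\<in>?P. H (permi \<sigma> k)) * B k)" for H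
  proof -
    have "(\<Sum>\<sigma>\<in>?P. \<Sum>k\<in>Q. H k * B k) = (\<Sum>\<sigma>\<in>?P. \<Sum>k\<in>Q. H (permi \<sigma> k) * B (permi \<sigma> k))"
      by (rule sum.cong[OF refl], rule sum_permi_reindex[symmetric, OF _ closed]) auto
    also have "\<dots> = (\<Sum>\<sigma>\<in>?P. \<Sum>k\<in>Q. H (permi \<sigma> k) * B k)"
      by (intro sum.cong refl) (simp add: inv)
    also have "\<dots> = (\<Sum>k\<in>Q. (\<Sum>\<sigma>\<in>?P. H (permi \<sigma> k)) * B k)"
      by (subst sum.swap) (simp add: sum_distrib_right)
    finally show ?thesis by (simp add: card_permutations_4)
  qed
  have "(\<Sum>k\<in>Q. (\<Sum>\<sigma>\<in>?P. F (permi \<sigma> k)) * B k) = (\<Sum>k\<in>Q. (\<Sum>\<sigma>\<in>?P. G (permi \<sigma> k)) * B k)"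
    by (rule sum.cong[OF refl]) (metis mult_zero_right orbit)
  then have "24 * (\<Sum>k\<in>Q. F k * B k) = 24 * (\<Sum>k\<in>Q. G k * B k)"
    unfolding average .
  then show ?thesis by simp
qed

lemma exists_transpose_to_max:
  fixes k :: "int^4"
  assumes "finite S" "p \<in> S"
  shows "\<exists>\<tau>. \<tau> permutes S \<and> (\<forall>j\<in>S. permi \<tau> k $ j \<le> permi \<tau> k $ p)"
proof -
  have ne: "(\<lambda>j. k$j) ` S \<noteq> {}" using assms by auto
  obtain i where i: "i \<in> S" "k$i = Max ((\<lambda>j. k$j) ` S)"
    using Max_in[OF finite_imageI[OF assms(1)] ne] by auto
  have max: "\<forall>j\<in>S. k$j \<le> k$i"
    using i Max_ge[OF finite_imageI[OF assms(1)]] by auto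
  define \<tau> where "\<tau> = Transposition.transpose p i"
  have tp: "\<tau> permutes S" unfolding \<tau>_def by (rule permutes_swap_id[OF assms(2) i(1)])
  have "permi \<tau> k $ j \<le> permi \<tau> k $ p" if "j \<in> S" for j
    using max permutes_in_image[OF tp, of j] that by (simp add: \<tau>_def)
  then show ?thesis using tp by blast
qed

lemma exists_permi_sorted:
  fixes k :: "int^4"
  shows "\<exists>\<sigma>. \<sigma> permutes UNIV \<and> permi \<sigma> k $1 \<ge> permi \<sigma> k $2 \<and> permi \<sigma> k $2 \<ge> permi \<sigma> k $3
          \<and> permi \<sigma> k $3 \<ge> permi \<sigma> k $4"
proof -
  note d = neq_4
  obtain \<tau>1 where t1: "\<tau>1 permutes UNIV" "\<forall>j. permi \<tau>1 k $ j \<le> permi \<tau>1 k $ 1"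
    using exists_transpose_to_max[of UNIV 1 k] by auto
  define k1 where "k1 = permi \<tau>1 k"
  obtain \<tau>2 where t2: "\<tau>2 permutes {2,3,4}" "\<forall>j\<in>{2,3,4}. permi \<tau>2 k1 $ j \<le> permi \<tau>2 k1 $ 2"
    using exists_transpose_to_max[of "{2,3,4}" 2 k1] by auto
  define k2 where "k2 = permi \<tau>2 k1"
  obtain \<tau>3 where t3: "\<tau>3 permutes {3,4}" "\<forall>j\<in>{3,4}. permi \<tau>3 k2 $ j \<le> permi \<tau>3 k2 $ 3"
    using exists_transpose_to_max[of "{3,4}" 3 k2] by auto
  define k3 where "k3 = permi \<tau>3 k2"
  have f21: "\<tau>2 1 = 1" using permutes_not_in[OF t2(1)] d by auto
  have f31: "\<tau>3 1 = 1" "\<tau>3 2 = 2" using permutes_not_in[OF t3(1)] d by auto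
  have k2_1: "k2 $ 1 = k1 $ 1" using f21 by (simp add: k2_def)
  have k2_le: "k2 $ j \<le> k2 $ 1" for j
    using t1(2) unfolding k2_def k1_def[symmetric] by (simp add: f21)
  have k3_12: "k3 $ 1 = k2 $ 1" "k3 $ 2 = k2 $ 2" using f31 by (simp_all add: k3_def)
  have k3_le1: "k3 $ j \<le> k3 $ 1" for j using k2_le[of "\<tau>3 j"] k3_12 by (simp add: k3_def)
  have tin: "\<tau>3 j \<in> {2,3,4}" if "j \<in> {2,3,4}" for j
  proof -
    have "{3,4} \<subseteq> {2,3,4::4}" by auto
    then have "\<tau>3 permutes {2,3,4}" by (rule permutes_subset[OF t3(1)])
    from permutes_in_image[OF this] that show ?thesis by simp
  qed
  have k3_le2: "k3 $ j \<le> k3 $ 2" if "j \<in> {3,4}" for j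
  proof -
    have "\<tau>3 j \<in> {2,3,4}" using tin that by blast
    then have "k2 $ (\<tau>3 j) \<le> k2 $ 2" using t2(2) unfolding k2_def by blast
    then show ?thesis using k3_12(2) by (simp add: k3_def)
  qed
  have p: "\<tau>1 \<circ> \<tau>2 \<circ> \<tau>3 permutes UNIV"
    using permutes_compose permutes_subset t1(1) t2(1) t3(1) by (metis subset_UNIV)
  have "k3 = permi (\<tau>1 \<circ> \<tau>2 \<circ> \<tau>3) k" by (simp add: k3_def k2_def k1_def permi_comp o_assoc)
  moreover have "k3 $ 4 \<le> k3 $ 3" using t3(2) unfolding k3_def by simp
  moreover have "k3 $ 3 \<le> k3 $ 2" using k3_le2[of 3] by simp
  moreover have "k3 $ 2 \<le> k3 $ 1" by (rule k3_le1)
  ultimately show ?thesis using p by metis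
qed

lemma sum_permutations_permi:
  assumes "\<pi> permutes (UNIV::4 set)"
  shows "(\<Sum>\<sigma>\<in>{\<sigma>. \<sigma> permutes UNIV}. F (permi \<sigma> (permi \<pi> k)))
       = (\<Sum>\<sigma>\<in>{\<sigma>. \<sigma> permutes UNIV}. F (permi \<sigma> k))"
  unfolding permi_comp
  by (rule setum_permutations_compose_left[symmetric, OF assms, where f = "\<lambda>\<sigma>. F (permi \<sigma> k)"])

lemma orbit_sums_eq_if_sorted:
  assumes "\<And>k. k$1 \<ge> k$2 \<Longrightarrow> k$2 \<ge> k$3 \<Longrightarrow> k$3 \<ge> k$4 \<Longrightarrow> R k \<Longrightarrow>
     (\<Sum>\<sigma>\<in>{\<sigma>. \<sigma> permutes UNIV}. F (permi \<sigma> k)) = (\<Sum>\<sigma>\<in>{\<sigma>. \<sigma> permutes UNIV}. G (permi \<sigma> k))"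
    and "\<And>\<pi>. \<pi> permutes UNIV \<Longrightarrow> R (permi \<pi> k)"
  shows "(\<Sum>\<sigma>\<in>{\<sigma>. \<sigma> permutes UNIV}. F (permi \<sigma> k)) = (\<Sum>\<sigma>\<in>{\<sigma>. \<sigma> permutes UNIV}. G (permi \<sigma> k))"
proof -
  obtain \<pi> where p: "\<pi> permutes UNIV" "permi \<pi> k $1 \<ge> permi \<pi> k $2" "permi \<pi> k $2 \<ge> permi \<pi> k $3"
    "permi \<pi> k $3 \<ge> permi \<pi> k $4" using exists_permi_sorted by blast
  have "(\<Sum>\<sigma>\<in>{\<sigma>. \<sigma> permutes UNIV}. F (permi \<sigma> k))
      = (\<Sum>\<sigma>\<in>{\<sigma>. \<sigma> permutes UNIV}. F (permi \<sigma> (permi \<pi> k)))"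
    by (rule sum_permutations_permi[OF p(1), symmetric])
  also have "\<dots> = (\<Sum>\<sigma>\<in>{\<sigma>. \<sigma> permutes UNIV}. G (permi \<sigma> (permi \<pi> k)))"
    using assms(1)[OF p(2-4) assms(2)[OF p(1)]] .
  also have "\<dots> = (\<Sum>\<sigma>\<in>{\<sigma>. \<sigma> permutes UNIV}. G (permi \<sigma> k))"
    by (rule sum_permutations_permi[OF p(1)])
  finally show ?thesis .
qed

text \<open>For suitable \<open>P\<close>, \<open>Q\<close> the orbit sums of \<open>tile P Q\<close> agree with those of the weights of
  \<open>LL\<close> and \<open>LLstar\<close>, while each summand is a box condition on three differences; this is what
  makes the kernels factorise.\<close>

definition tile :: "(int \<Rightarrow> bool) \<Rightarrow> (int \<Rightarrow> bool) \<Rightarrow> int^4 \<Rightarrow> real" where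
  "tile P Q k = of_bool (P (k$2 - k$1) \<and> P (k$3 - k$1) \<and> P (k$4 - k$1))
            + of_bool (Q (k$1 - k$2) \<and> P (k$3 - k$2) \<and> P (k$4 - k$2))
            + of_bool (Q (k$1 - k$3) \<and> Q (k$2 - k$3) \<and> P (k$4 - k$3))
            + of_bool (Q (k$1 - k$4) \<and> Q (k$2 - k$4) \<and> Q (k$3 - k$4))"

definition tile_open :: "nat \<Rightarrow> int^4 \<Rightarrow> real" where
  "tile_open n = tile (\<lambda>x. 0 \<le> x \<and> x < 4 * int n) (\<lambda>x. 0 < x \<and> x < 4 * int n)"

definition tile_closed :: "nat \<Rightarrow> int^4 \<Rightarrow> real" where
  "tile_closed n = tile (\<lambda>x. 0 \<le> x \<and> x < 4 * int n) (\<lambda>x. 0 < x \<and> x \<le> 4 * int n)"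

definition Lam_int_weight :: "nat \<Rightarrow> int^4 \<Rightarrow> real" where
  "Lam_int_weight n k = 24 * of_bool (k$4 < k$3 \<and> k$3 < k$2 \<and> k$2 < k$1 \<and> k$1 < k$4 + 4 * int n)"

lemma orbit_sum_Lam_int_weight_sorted:
  assumes "k$1 > k$2" "k$2 > k$3" "k$3 > k$4"
  shows "(\<Sum>\<sigma>\<in>{\<sigma>. \<sigma> permutes UNIV}. Lam_int_weight n (permi \<sigma> k))
       = (\<Sum>\<sigma>\<in>{\<sigma>. \<sigma> permutes UNIV}. tile_open n (permi \<sigma> k))"
  using assms
  unfolding sum_permutations_4 perms4_def tile_def tile_open_def Lam_int_weight_def
  by (simp only: list.map sum_list.Cons sum_list.Nil permi_nth perm4_simps of_bool_def)
     (cases "k$1 - k$4 < 4 * int n"; simp)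

definition distinct_coords :: "int^4 \<Rightarrow> bool" where
  "distinct_coords k \<longleftrightarrow> (\<forall>i j. i \<noteq> j \<longrightarrow> k$i \<noteq> k$j)"

lemma distinct_coords_permi: "\<pi> permutes UNIV \<Longrightarrow> distinct_coords k \<Longrightarrow> distinct_coords (permi \<pi> k)"
  unfolding distinct_coords_def using permutes_inj[of \<pi> UNIV] by (simp add: inj_eq)

lemma orbit_sum_Lam_int_weight:
  assumes "distinct_coords k"
  shows "(\<Sum>\<sigma>\<in>{\<sigma>. \<sigma> permutes UNIV}. Lam_int_weight n (permi \<sigma> k))
       = (\<Sum>\<sigma>\<in>{\<sigma>. \<sigma> permutes UNIV}. tile_open n (permi \<sigma> k))"
proof (rule orbit_sums_eq_if_sorted[where R = distinct_coords])
  fix k :: "int^4" assume k: "k$1 \<ge> k$2" "k$2 \<ge> k$3" "k$3 \<ge> k$4" "distinct_coords k"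
  then have "k$1 \<noteq> k$2" "k$2 \<noteq> k$3" "k$3 \<noteq> k$4"
    using neq_4 unfolding distinct_coords_def by auto
  with k show "(\<Sum>\<sigma>\<in>{\<sigma>. \<sigma> permutes UNIV}. Lam_int_weight n (permi \<sigma> k))
       = (\<Sum>\<sigma>\<in>{\<sigma>. \<sigma> permutes UNIV}. tile_open n (permi \<sigma> k))"
    by (intro orbit_sum_Lam_int_weight_sorted) auto
qed (simp add: assms distinct_coords_permi)

definition Lam_weight :: "nat \<Rightarrow> int \<Rightarrow> int \<Rightarrow> int \<Rightarrow> int \<Rightarrow> real" where
  "Lam_weight n a b c d = (if a \<ge> b \<and> b \<ge> c \<and> c \<ge> d \<and> a \<le> d + 4 * int n then
     (let ra = (a = b); rb = (b = c); rc = (c = d); rd = (a = d + 4 * int n);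
          cnt = (of_bool ra + of_bool rb + of_bool rc + of_bool rd :: nat)
      in if cnt = 0 then 24
         else if cnt = 1 then 12
         else if cnt = 2 then (if (ra \<and> rc) \<or> (rb \<and> rd) then 6 else 4)
         else 1) else 0)"

lemma card_relations:
  "card {i::nat. (i = 0 \<and> ra) \<or> (i = 1 \<and> rb) \<or> (i = 2 \<and> rc) \<or> (i = 3 \<and> rd)}
   = of_bool ra + of_bool rb + of_bool rc + of_bool rd"
proof -
  have "{i::nat. (i = 0 \<and> ra) \<or> (i = 1 \<and> rb) \<or> (i = 2 \<and> rc) \<or> (i = 3 \<and> rd)}
     = (if ra then {0} else {}) \<union> (if rb then {1} else {}) \<union> (if rc then {2} else {})
       \<union> (if rd then {3} else {})"
    by auto
  then show ?thesis by (cases ra; cases rb; cases rc; cases rd) auto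
qed

lemma Lam_weight_eq: "k \<in> HH \<Longrightarrow> Lam_weight n (k$1) (k$2) (k$3) (k$4) = of_bool (k \<in> Lam n) * lam n k"
  unfolding Lam_weight_def lam_def Lam_def card_relations Let_def by auto

text \<open>The boundary weights \<open>lam n\<close> are exactly what makes the orbit sums of the closed tile come
  out right on the faces of the simplex; the check is a finite case distinction.\<close>

lemma orbit_sum_Lam_weight:
  assumes "n \<ge> 1"
  shows "(\<Sum>\<sigma>\<in>{\<sigma>. \<sigma> permutes UNIV}.
            Lam_weight n (permi \<sigma> k $ 1) (permi \<sigma> k $ 2) (permi \<sigma> k $ 3) (permi \<sigma> k $ 4))
       = (\<Sum>\<sigma>\<in>{\<sigma>. \<sigma> permutes UNIV}. tile_closed n (permi \<sigma> k))"
proof (rule orbit_sums_eq_if_sorted[where R = "\<lambda>_. True" and F = "\<lambda>k. Lam_weight n (k$1) (k$2) (k$3) (k$4)"])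
  fix k :: "int^4" assume "k$1 \<ge> k$2" "k$2 \<ge> k$3" "k$3 \<ge> k$4"
  with assms show "(\<Sum>\<sigma>\<in>{\<sigma>. \<sigma> permutes UNIV}. Lam_weight n (permi \<sigma> k $1) (permi \<sigma> k $2) (permi \<sigma> k $3) (permi \<sigma> k $4))
   = (\<Sum>\<sigma>\<in>{\<sigma>. \<sigma> permutes UNIV}. tile_closed n (permi \<sigma> k))"
    unfolding sum_permutations_4 perms4_def tile_def tile_closed_def
    by (simp only: list.map sum_list.Cons sum_list.Nil permi_nth perm4_simps of_bool_def
          Lam_weight_def Let_def)
       (cases "k$1 = k$2"; cases "k$2 = k$3"; cases "k$3 = k$4"; cases "k$1 - k$4 < 4 * int n";
        cases "k$1 - k$4 = 4 * int n"; simp)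
qed simp

lemma kernel_LL_tiled:
  "(\<Sum>k\<in>Lam_int n. TS k t * cnj (TS k s)) =
   (1/24) * (\<Sum>k\<in>HH_box n. of_real (tile_open n k) * (TS k t * cnj (TS k s)))"
proof -
  let ?A = "\<lambda>k. TS k t * cnj (TS k s)"
  have "(\<Sum>k\<in>HH_box n. of_real (Lam_int_weight n k) * ?A k) = (\<Sum>k\<in>HH_box n. of_real (tile_open n k) * ?A k)"
  proof (rule sum_mult_eq_if_orbit_sums_eq[OF finite_HH_box HH_box_permi])
    show "?A (permi \<sigma> k) = ?A k" if "\<sigma> permutes UNIV" for \<sigma> k
      using TS_permi[OF that] of_int_sign_mult_self[of \<sigma>] by (simp add: algebra_simps)
    fix k assume "?A k \<noteq> 0"
    then have "distinct_coords k"
      unfolding distinct_coords_def using TS_eq_0_if_coords_eq by force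
    from orbit_sum_Lam_int_weight[OF this, of n]
    show "(\<Sum>\<sigma>\<in>{\<sigma>. \<sigma> permutes UNIV}. complex_of_real (Lam_int_weight n (permi \<sigma> k))) =
          (\<Sum>\<sigma>\<in>{\<sigma>. \<sigma> permutes UNIV}. complex_of_real (tile_open n (permi \<sigma> k)))"
      by (simp only: of_real_sum[symmetric])
  qed
  moreover have "(\<Sum>k\<in>HH_box n. of_real (Lam_int_weight n k) * ?A k) = 24 * (\<Sum>k\<in>Lam_int n. ?A k)"
  proof -
    have "Lam_int n \<subseteq> HH_box n" using Lam_int_subset_Lam Lam_subset_HH_box by blast
    then have "HH_box n \<inter> Lam_int n = Lam_int n" by blast
    moreover have "of_real (Lam_int_weight n k) * ?A k = 24 * (if k \<in> Lam_int n then ?A k else 0)"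
      if "k \<in> HH_box n" for k
      using that by (auto simp: Lam_int_weight_def Lam_int_def HH_box_def)
    ultimately show ?thesis
      by (simp add: sum_distrib_left[symmetric] sum.inter_restrict[OF finite_HH_box, symmetric]
          cong: sum.cong)
  qed
  ultimately show ?thesis by (simp add: field_simps mult.commute)
qed

lemma kernel_LLstar_tiled:
  assumes "n \<ge> 1"
  shows "(\<Sum>k\<in>Lam n. of_real (lam n k) * TC k t * cnj (TC k s)) =
         (\<Sum>k\<in>HH_box n. of_real (tile_closed n k) * (TC k t * cnj (TC k s)))"
proof -
  let ?B = "\<lambda>k. TC k t * cnj (TC k s)"
  let ?F = "\<lambda>k. complex_of_real (Lam_weight n (k$1) (k$2) (k$3) (k$4))"
  have "(\<Sum>k\<in>HH_box n. ?F k * ?B k) = (\<Sum>k\<in>HH_box n. of_real (tile_closed n k) * ?B k)"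
  proof (rule sum_mult_eq_if_orbit_sums_eq[OF finite_HH_box HH_box_permi])
    show "?B (permi \<sigma> k) = ?B k" if "\<sigma> permutes UNIV" for \<sigma> k
      using TC_permi[OF that] by simp
    from orbit_sum_Lam_weight[OF assms]
    show "(\<Sum>\<sigma>\<in>{\<sigma>. \<sigma> permutes UNIV}. ?F (permi \<sigma> k)) =
          (\<Sum>\<sigma>\<in>{\<sigma>. \<sigma> permutes UNIV}. complex_of_real (tile_closed n (permi \<sigma> k)))" for k
      by (simp only: of_real_sum[symmetric])
  qed
  moreover have "(\<Sum>k\<in>HH_box n. ?F k * ?B k) = (\<Sum>k\<in>Lam n. of_real (lam n k) * TC k t * cnj (TC k s))"
  proof -
    have "HH_box n \<inter> Lam n = Lam n" using Lam_subset_HH_box by blast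
    moreover have "?F k * ?B k = (if k \<in> Lam n then of_real (lam n k) * TC k t * cnj (TC k s) else 0)"
      if "k \<in> HH_box n" for k
      using that Lam_weight_eq[of k n] by (auto simp: HH_box_def mult.assoc)
    ultimately show ?thesis
      by (simp add: sum.inter_restrict[OF finite_HH_box, symmetric] cong: sum.cong)
  qed
  ultimately show ?thesis by simp
qed

section \<open>Factorisation into geometric sums\<close>

lemma dotk_diff: "dotk k (a - b) = dotk k a - dotk k b"
  by (simp add: dotk_def algebra_simps sum_subtractf)

lemma phi_mult_cnj: "phi k a * cnj (phi k b) = phi k (a - b)"
proof -
  have "cnj (phi k b) = exp (- (\<i> * complex_of_real (pi / 2 * dotk k b)))"
    by (simp add: phi_def exp_cnj)
  then show ?thesis
    by (simp add: phi_def exp_add[symmetric] dotk_diff algebra_simps)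
qed

lemma TS_mult_cnj: "TS k t * cnj (TS k s) = (1/576) *
  (\<Sum>\<sigma>\<in>{\<sigma>. \<sigma> permutes UNIV}. \<Sum>\<tau>\<in>{\<tau>. \<tau> permutes UNIV}.
     (of_int (sign \<sigma>) * of_int (sign \<tau>)) * phi k (permv \<sigma> t - permv \<tau> s))"
proof -
  have "TS k t * cnj (TS k s) = (1/576) * ((\<Sum>\<sigma>\<in>{\<sigma>. \<sigma> permutes UNIV}. of_int (sign \<sigma>) * phi k (permv \<sigma> t)) *
     (\<Sum>\<tau>\<in>{\<tau>. \<tau> permutes UNIV}. of_int (sign \<tau>) * cnj (phi k (permv \<tau> s))))"
    by (simp add: TS_def)
  also have "\<dots> = (1/576) *
  (\<Sum>\<sigma>\<in>{\<sigma>. \<sigma> permutes UNIV}. \<Sum>\<tau>\<in>{\<tau>. \<tau> permutes UNIV}.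
     (of_int (sign \<sigma>) * of_int (sign \<tau>)) * (phi k (permv \<sigma> t) * cnj (phi k (permv \<tau> s))))"
    by (simp add: sum_product algebra_simps)
  finally show ?thesis by (simp add: phi_mult_cnj)
qed

lemma TC_mult_cnj: "TC k t * cnj (TC k s) = (1/576) *
  (\<Sum>\<sigma>\<in>{\<sigma>. \<sigma> permutes UNIV}. \<Sum>\<tau>\<in>{\<tau>. \<tau> permutes UNIV}. phi k (permv \<sigma> t - permv \<tau> s))"
proof -
  have "TC k t * cnj (TC k s) = (1/576) * ((\<Sum>\<sigma>\<in>{\<sigma>. \<sigma> permutes UNIV}. phi k (permv \<sigma> t)) *
     (\<Sum>\<tau>\<in>{\<tau>. \<tau> permutes UNIV}. cnj (phi k (permv \<tau> s))))"
    by (simp add: TC_def)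
  also have "\<dots> = (1/576) *
  (\<Sum>\<sigma>\<in>{\<sigma>. \<sigma> permutes UNIV}. \<Sum>\<tau>\<in>{\<tau>. \<tau> permutes UNIV}. phi k (permv \<sigma> t) * cnj (phi k (permv \<tau> s)))"
    by (simp add: sum_product)
  finally show ?thesis by (simp add: phi_mult_cnj)
qed

definition wave :: "real \<Rightarrow> int \<Rightarrow> complex" where
  "wave x d = exp (complex_of_real (2 * pi * real_of_int d * x) * \<i>)"

definition wave_sum :: "int set \<Rightarrow> real \<Rightarrow> complex" where
  "wave_sum D x = (\<Sum>d\<in>D. wave x d)"

definition HH_param :: "4 \<Rightarrow> 4 \<Rightarrow> 4 \<Rightarrow> 4 \<Rightarrow> int \<times> int \<times> int \<Rightarrow> int^4" where
  "HH_param i a b c p = (case p of (x, y, z) \<Rightarrow>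
     (\<chi> j. if j = i then -(x+y+z) else if j = a then 4*x - (x+y+z)
           else if j = b then 4*y - (x+y+z) else 4*z - (x+y+z)))"

lemma HH_param_nth:
  assumes "distinct [i,a,b,c]"
  shows "HH_param i a b c (x,y,z) $ i = -(x+y+z)" "HH_param i a b c (x,y,z) $ a = 4*x - (x+y+z)"
        "HH_param i a b c (x,y,z) $ b = 4*y - (x+y+z)" "HH_param i a b c (x,y,z) $ c = 4*z - (x+y+z)"
  using assms by (auto simp: HH_param_def)

lemma sum_product_3:
  fixes F :: "'a \<Rightarrow> 'd::comm_semiring_1" and G :: "'b \<Rightarrow> 'd" and H :: "'c \<Rightarrow> 'd"
  assumes "finite A" "finite B" "finite C"
  shows "(\<Sum>p\<in>A \<times> B \<times> C. F (fst p) * G (fst (snd p)) * H (snd (snd p)))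
        = sum F A * sum G B * sum H C"
proof -
  have "(\<Sum>p\<in>A \<times> B \<times> C. F (fst p) * G (fst (snd p)) * H (snd (snd p)))
      = (\<Sum>x\<in>A. \<Sum>q\<in>B \<times> C. F x * G (fst q) * H (snd q))"
    by (simp add: sum.cartesian_product')
  also have "\<dots> = (\<Sum>x\<in>A. \<Sum>y\<in>B. \<Sum>z\<in>C. F x * G y * H z)"
    by (simp add: sum.cartesian_product')
  also have "\<dots> = (\<Sum>x\<in>A. \<Sum>y\<in>B. \<Sum>z\<in>C. F x * (G y * H z))"
    by (simp only: mult.assoc)
  also have "\<dots> = (\<Sum>x\<in>A. F x * (\<Sum>y\<in>B. G y * (\<Sum>z\<in>C. H z)))"
    by (simp only: sum_distrib_left)
  also have "\<dots> = sum F A * sum G B * sum H C"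
    by (simp only: mult.assoc sum_distrib_right)
  finally show ?thesis .
qed

lemma sum_HH_box_diffs_phi:
  fixes u :: "real^4" and n :: nat
  assumes dis: "distinct [i,a,b,c]"
    and su: "sum (\<lambda>j. u$j) UNIV = 0"
    and Pa: "\<And>d. Pa (4*d) \<longleftrightarrow> d \<in> Da" and Da: "Da \<subseteq> {0..int n}"
    and Pb: "\<And>d. Pb (4*d) \<longleftrightarrow> d \<in> Db" and Db: "Db \<subseteq> {0..int n}"
    and Pc: "\<And>d. Pc (4*d) \<longleftrightarrow> d \<in> Dc" and Dc: "Dc \<subseteq> {0..int n}"
  shows "(\<Sum>k\<in>HH_box n. of_bool (Pa (k$a - k$i) \<and> Pb (k$b - k$i) \<and> Pc (k$c - k$i)) * phi k u)
       = wave_sum Da (u$a) * wave_sum Db (u$b) * wave_sum Dc (u$c)"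
proof -
  let ?C = "\<lambda>k. Pa (k$a - k$i) \<and> Pb (k$b - k$i) \<and> Pc (k$c - k$i)"
  let ?S = "HH_box n \<inter> {k. ?C k}"
  let ?g = "\<lambda>k::int^4. ((k$a - k$i) div 4, (k$b - k$i) div 4, (k$c - k$i) div 4)"
  let ?h = "HH_param i a b c"
  have sumu: "u$i + u$a + u$b + u$c = 0" using su sum_UNIV_4_distinct[OF dis, of "\<lambda>j. u$j"] by simp
  have "(\<Sum>k\<in>HH_box n. of_bool (?C k) * phi k u) = (\<Sum>k\<in>?S. phi k u)"
    by (subst sum.inter_restrict[OF finite_HH_box]) (rule sum.cong[OF refl], simp)
  also have "\<dots> = (\<Sum>p\<in>Da \<times> Db \<times> Dc. phi (?h p) u)"
  proof (rule sum.reindex_bij_witness[of ?S ?h ?g])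
    fix k assume k: "k \<in> ?S"
    then have kH: "k \<in> HH" by (simp add: HH_box_def)
    then have sk: "k$i + k$a + k$b + k$c = 0" and md: "\<forall>j l. k$j mod 4 = k$l mod 4"
      using sum_UNIV_4_distinct[OF dis, of "\<lambda>j. k$j"] by (auto simp: HH_iff)
    have d4: "4 dvd (k$l - k$i)" for l using md by (metis mod_eq_dvd_iff)
    have e: "4 * ((k$l - k$i) div 4) = k$l - k$i" for l using d4[of l] by simp
    have ea: "4 * ((k$a - k$i) div 4) = k$a - k$i" by (rule e)
    have eb: "4 * ((k$b - k$i) div 4) = k$b - k$i" by (rule e)
    have ec: "4 * ((k$c - k$i) div 4) = k$c - k$i" by (rule e)
    have sxyz: "(k$a - k$i) div 4 + (k$b - k$i) div 4 + (k$c - k$i) div 4 = - k$i"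
      using ea eb ec sk by linarith
    show hg: "?h (?g k) = k"
      unfolding vec_eq_iff all_4_distinct[OF dis]
      using HH_param_nth[OF dis] sxyz ea eb ec by simp
    show "phi (?h (?g k)) u = phi k u" using hg by simp
    show "?g k \<in> Da \<times> Db \<times> Dc"
      using k Pa[of "(k$a - k$i) div 4"] Pb[of "(k$b - k$i) div 4"] Pc[of "(k$c - k$i) div 4"] ea eb ec
      by auto
  next
    fix p assume p: "p \<in> Da \<times> Db \<times> Dc"
    obtain x y z where pe: "p = (x,y,z)" by (cases p) auto
    have xr: "0 \<le> x" "x \<le> int n" "0 \<le> y" "y \<le> int n" "0 \<le> z" "z \<le> int n"
      using p Da Db Dc pe by auto
    note hn = HH_param_nth[OF dis, of x y z]
    show "?g (?h p) = p" using pe hn by simp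
    have cm: "?h p $ j mod 4 = (-(x+y+z)) mod 4" for j
    proof -
      have "j \<in> {i,a,b,c}" using UNIV_4_eq_distinct[OF dis] by blast
      then show ?thesis using hn pe by (auto simp: mod_eq_dvd_iff)
    qed
    have "sum (\<lambda>j. ?h p $ j) UNIV = 0"
      unfolding sum_UNIV_4_distinct[OF dis] pe hn by simp
    then have inH: "?h p \<in> HH" unfolding HH_iff using cm by simp
    have bd: "\<forall>j. \<bar>?h p $ j\<bar> \<le> 4 * int n"
      unfolding pe all_4_distinct[OF dis] hn using xr by auto
    have da: "?h p $ a - ?h p $ i = 4*x" "?h p $ b - ?h p $ i = 4*y" "?h p $ c - ?h p $ i = 4*z"
      using hn pe by simp_all
    have cd: "?C (?h p)" unfolding da using p pe Pa[of x] Pb[of y] Pc[of z] by simp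
    show "?h p \<in> ?S" using inH bd cd by (simp add: HH_box_def)
  qed
  also have "\<dots> = (\<Sum>p\<in>Da \<times> Db \<times> Dc.
      wave (u$a) (fst p) * wave (u$b) (fst (snd p)) * wave (u$c) (snd (snd p)))"
  proof (rule sum.cong[OF refl])
    fix p :: "int \<times> int \<times> int"
    obtain x y z where pe: "p = (x,y,z)" by (cases p) auto
    note hn = HH_param_nth[OF dis, of x y z]
    have "dotk (?h p) u = 4 * (x * u$a + y * u$b + z * u$c) - (x+y+z) * (u$i + u$a + u$b + u$c)"
      unfolding dotk_def sum_UNIV_4_distinct[OF dis] pe hn by (simp add: algebra_simps)
    then have "dotk (?h p) u = 4 * (x * u$a + y * u$b + z * u$c)" using sumu by simp
    then have "pi / 2 * dotk (?h p) u = 2*pi*x*u$a + 2*pi*y*u$b + 2*pi*z*u$c"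
      by (simp add: algebra_simps)
    then have "\<i> * complex_of_real (pi / 2 * dotk (?h p) u) =
        complex_of_real (2*pi*x*u$a) * \<i> + complex_of_real (2*pi*y*u$b) * \<i> + complex_of_real (2*pi*z*u$c) * \<i>"
      by (simp add: algebra_simps)
    then show "phi (?h p) u = wave (u$a) (fst p) * wave (u$b) (fst (snd p)) * wave (u$c) (snd (snd p))"
      unfolding phi_def wave_def pe by (simp only: fst_conv snd_conv exp_add)
  qed
  also have "\<dots> = wave_sum Da (u$a) * wave_sum Db (u$b) * wave_sum Dc (u$c)"
    unfolding wave_sum_def by (rule sum_product_3) (use Da Db Dc in \<open>auto intro: finite_subset\<close>)
  finally show ?thesis .
qed

lemma sum_tile_phi:
  fixes u :: "real^4"
  assumes su: "sum (\<lambda>j. u$j) UNIV = 0"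
    and P: "\<And>d. P (4*d) \<longleftrightarrow> d \<in> DP" "DP \<subseteq> {0..int n}"
    and Q: "\<And>d. Q (4*d) \<longleftrightarrow> d \<in> DQ" "DQ \<subseteq> {0..int n}"
  shows "(\<Sum>k\<in>HH_box n. of_real (tile P Q k) * phi k u) =
       wave_sum DP (u$2) * wave_sum DP (u$3) * wave_sum DP (u$4)
     + wave_sum DQ (u$1) * wave_sum DP (u$3) * wave_sum DP (u$4)
     + wave_sum DQ (u$1) * wave_sum DQ (u$2) * wave_sum DP (u$4)
     + wave_sum DQ (u$1) * wave_sum DQ (u$2) * wave_sum DQ (u$3)"
proof -
  have e: "of_real (tile P Q k) * phi k u =
      of_bool (P (k$2 - k$1) \<and> P (k$3 - k$1) \<and> P (k$4 - k$1)) * phi k u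
    + of_bool (Q (k$1 - k$2) \<and> P (k$3 - k$2) \<and> P (k$4 - k$2)) * phi k u
    + of_bool (Q (k$1 - k$3) \<and> Q (k$2 - k$3) \<and> P (k$4 - k$3)) * phi k u
    + of_bool (Q (k$1 - k$4) \<and> Q (k$2 - k$4) \<and> Q (k$3 - k$4)) * phi k u" for k
    unfolding tile_def by (simp add: distrib_right)
  have d: "distinct [1,2,3,4::4]" "distinct [2,1,3,4::4]" "distinct [3,1,2,4::4]" "distinct [4,1,2,3::4]"
    using neq_4 by auto
  show ?thesis
    unfolding e sum.distrib
    using sum_HH_box_diffs_phi[OF d(1) su P P P]
          sum_HH_box_diffs_phi[OF d(2) su Q P P]
          sum_HH_box_diffs_phi[OF d(3) su Q Q P]
          sum_HH_box_diffs_phi[OF d(4) su Q Q Q]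
    by (simp add: P Q)
qed

section \<open>One-dimensional estimates\<close>

lemma sum_lessThan_add:
  fixes f :: "nat \<Rightarrow> 'a::comm_monoid_add"
  shows "(\<Sum>t<A+B. f t) = (\<Sum>t<A. f t) + (\<Sum>t<B. f (A + t))"
  by (induction B) (simp_all add: add.assoc)

lemma sin_ge_third:
  assumes "0 \<le> x" "x \<le> pi/2"
  shows "x / 3 \<le> sin x"
proof (cases "x \<le> pi/3")
  case True
  have "(\<lambda>x. sin x - x/3) 0 \<le> (\<lambda>x. sin x - x/3) x"
  proof (rule DERIV_nonneg_imp_nondecreasing[OF assms(1)])
    fix y assume y0: "0 \<le> y" and y1: "y \<le> x"
    then have y: "0 \<le> y \<and> y \<le> x" by simp
    show "\<exists>d. ((\<lambda>x. sin x - x/3) has_real_derivative d) (at y) \<and> 0 \<le> d"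
    proof (intro exI conjI)
      show "((\<lambda>x. sin x - x/3) has_real_derivative (cos y - 1/3)) (at y)"
        by (auto intro!: derivative_eq_intros)
      have "cos (pi/3) \<le> cos y" using y True by (intro cos_monotone_0_pi_le) auto
      then show "0 \<le> cos y - 1/3" using cos_60 by simp
    qed
  qed
  then show ?thesis by simp
next
  case False
  have "sin (pi/3) \<le> sin x"
    using False assms by (intro sin_monotone_2pi_le) auto
  moreover have "sqrt 3 \<ge> 4/3"
    by (rule real_le_rsqrt) (simp add: power2_eq_square)
  moreover have "x / 3 \<le> 2/3" using assms pi_less_4 by simp
  ultimately show ?thesis using sin_60 by simp
qed

lemma abs_le_abs_sin_pi:
  assumes "\<bar>y\<bar> \<le> 1/2"
  shows "\<bar>y\<bar> \<le> \<bar>sin (pi * y)\<bar>"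
proof -
  have a: "0 \<le> pi * \<bar>y\<bar>" by simp
  have b: "pi * \<bar>y\<bar> \<le> pi * (1/2)" by (rule mult_left_mono[OF assms]) simp
  have s3: "pi * \<bar>y\<bar> / 3 \<le> sin (pi * \<bar>y\<bar>)"
    by (rule sin_ge_third[OF a]) (use b in simp)
  have s0: "0 \<le> sin (pi * \<bar>y\<bar>)" by (rule sin_ge_zero[OF a]) (use b in simp)
  have p3: "\<bar>y\<bar> \<le> pi * \<bar>y\<bar> / 3"
  proof -
    have "3 * \<bar>y\<bar> \<le> pi * \<bar>y\<bar>" by (rule mult_right_mono) (use pi_gt3 in auto)
    then show ?thesis by simp
  qed
  have eq: "\<bar>sin (pi * y)\<bar> = sin (pi * \<bar>y\<bar>)"
  proof (cases "y \<ge> 0")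
    case True then show ?thesis using s0 by simp
  next
    case False
    then have "pi * y = - (pi * \<bar>y\<bar>)" by simp
    then have "sin (pi * y) = - sin (pi * \<bar>y\<bar>)" by (simp only: sin_minus)
    then show ?thesis using s0 by simp
  qed
  show ?thesis using s3 p3 eq by linarith
qed

lemma wave_add: "wave x (a + b) = wave x a * wave x b"
  by (simp add: wave_def exp_add[symmetric] algebra_simps)

lemma norm_wave[simp]: "norm (wave x d) = 1"
  by (simp add: wave_def)

lemma wave_sum_telescope:
  assumes "p \<le> q + 1"
  shows "(wave x 1 - 1) * (\<Sum>d\<in>{p..q}. wave x d) = wave x (q + 1) - wave x p"
proof -
  have "p - 1 \<le> q" using assms by simp
  then show ?thesis
  proof (induction q rule: int_ge_induct)
    case base
    then show ?case by simp
  next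
    case (step q)
    have ih: "(wave x 1 - 1) * (\<Sum>d\<in>{p..q}. wave x d) = wave x (q + 1) - wave x p"
      using step.IH by simp
    have "{p..q+1} = insert (q+1) {p..q}" using step by auto
    then have se: "(\<Sum>d\<in>{p..q+1}. wave x d) = wave x (q+1) + (\<Sum>d\<in>{p..q}. wave x d)" by simp
    have m: "wave x 1 * wave x (q+1) = wave x (q+1+1)"
      using wave_add[of x 1 "q+1"] by (simp add: add.commute)
    have "(wave x 1 - 1) * (\<Sum>d\<in>{p..q+1}. wave x d)
        = (wave x 1 - 1) * wave x (q+1) + (wave x 1 - 1) * (\<Sum>d\<in>{p..q}. wave x d)"
      unfolding se by (simp only: distrib_left)
    also have "\<dots> = (wave x 1 * wave x (q+1) - wave x (q+1)) + (wave x (q+1) - wave x p)"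
      unfolding ih by (simp only: left_diff_distrib mult_1)
    also have "\<dots> = wave x (q+1+1) - wave x p" unfolding m by simp
    finally show ?case .
  qed
qed

lemma norm_wave_sum_le_inverse_sin:
  assumes "sin (pi * x) \<noteq> 0"
  shows "norm (wave_sum {p..q} x) \<le> 1 / \<bar>sin (pi * x)\<bar>"
proof (cases "p \<le> q + 1")
  case False
  then have "{p..q} = {}" by auto
  then show ?thesis by (simp add: wave_sum_def)
next
  case True
  have n1: "norm (wave x 1 - 1) = 2 * \<bar>sin (pi * x)\<bar>"
    using dist_exp_i_1[of "2 * pi * x"] by (simp add: wave_def mult.commute)
  have "norm (wave x 1 - 1) * norm (wave_sum {p..q} x) = norm (wave x (q + 1) - wave x p)"
    using wave_sum_telescope[OF True, of x] by (simp add: wave_sum_def norm_mult[symmetric])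
  also have "\<dots> \<le> 2" using norm_triangle_ineq4[of "wave x (q + 1)" "wave x p"] by simp
  finally have "2 * \<bar>sin (pi * x)\<bar> * norm (wave_sum {p..q} x) \<le> 2" using n1 by simp
  then show ?thesis using assms by (simp add: field_simps)
qed

lemma norm_wave_sum_le_card:
  assumes "0 \<le> p" "q \<le> int n"
  shows "norm (wave_sum {p..q} x) \<le> real n + 1"
proof -
  have "norm (wave_sum {p..q} x) \<le> (\<Sum>d\<in>{p..q}. norm (wave x d))" unfolding wave_sum_def by (rule norm_sum)
  also have "\<dots> = real (card {p..q})" by simp
  also have "\<dots> \<le> real n + 1" using assms by auto
  finally show ?thesis .
qed

lemma wave_sum_periodic: "wave_sum D (x + of_int m) = wave_sum D x"
proof -
  have "wave (x + of_int m) d = wave x d" for d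
  proof -
    have "wave (x + of_int m) d = wave x d * exp (complex_of_real (2 * pi * real_of_int (d*m)) * \<i>)"
      by (simp add: wave_def exp_add[symmetric] algebra_simps)
    also have "exp (complex_of_real (2 * pi * real_of_int (d*m)) * \<i>) = cis (2 * pi * real_of_int (d*m))"
      by (simp add: cis_conv_exp mult.commute)
    also have "\<dots> = 1" by (rule cis_multiple_2pi) simp
    finally show ?thesis by simp
  qed
  then show ?thesis by (simp add: wave_sum_def)
qed

lemma norm_wave_sum_grid_le:
  assumes n: "n \<ge> 1" and pq: "0 \<le> p" "q \<le> int n"
    and r: "-2 * int n \<le> r" "r < 2 * int n" and ph: "0 \<le> \<phi>" "\<phi> < 1"
  shows "norm (wave_sum {p..q} ((r + \<phi>) / (4 * n))) \<le> 4 * real n / max 1 (\<bar>real_of_int r\<bar> - 1)"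
proof -
  let ?y = "(r + \<phi>) / (4 * real n)"
  have np: "(0::real) < 4 * real n" using n by simp
  have "real_of_int (-2 * int n) \<le> real_of_int r" using r(1) by (simp only: of_int_le_iff)
  then have r1: "-2 * real n \<le> real_of_int r" by simp
  have "r \<le> 2 * int n - 1" using r(2) by simp
  then have "real_of_int r \<le> real_of_int (2 * int n - 1)" by (simp only: of_int_le_iff)
  then have r2: "real_of_int r \<le> 2 * real n - 1" by simp
  have yb: "\<bar>?y\<bar> \<le> 1/2"
  proof -
    have "\<bar>r + \<phi>\<bar> \<le> 2 * real n" unfolding abs_le_iff using r1 r2 ph by linarith
    then have "\<bar>r + \<phi>\<bar> / (4 * real n) \<le> 2 * real n / (4 * real n)"
      using np by (intro divide_right_mono) auto
    also have "2 * real n / (4 * real n) = 1/2" using np by simp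
    finally show ?thesis using np by (simp add: abs_divide)
  qed
  show ?thesis
  proof (cases "-2 \<le> r \<and> r \<le> 0")
    case True
    then have "real_of_int (-2) \<le> real_of_int r" "real_of_int r \<le> real_of_int 0"
      by (simp_all only: of_int_le_iff)
    then have "\<bar>real_of_int r\<bar> - 1 \<le> 1" by (simp add: abs_le_iff)
    then have "max 1 (\<bar>real_of_int r\<bar> - 1) = 1" by simp
    moreover have "norm (wave_sum {p..q} ?y) \<le> real n + 1" by (rule norm_wave_sum_le_card[OF pq])
    ultimately show ?thesis using n by simp
  next
    case False
    then have "1 \<le> r \<or> r \<le> -3" by linarith
    then have "real_of_int 1 \<le> real_of_int r \<or> real_of_int r \<le> real_of_int (-3)"
      by (simp only: of_int_le_iff)
    then have rc: "1 \<le> real_of_int r \<or> real_of_int r \<le> -3" by simp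
    have ra: "\<bar>real_of_int r\<bar> - 1 \<le> \<bar>r + \<phi>\<bar>" using rc ph by (auto simp: abs_if)
    have rpos: "1 \<le> \<bar>r + \<phi>\<bar>" using rc ph by (auto simp: abs_if)
    have m1: "max 1 (\<bar>real_of_int r\<bar> - 1) \<le> \<bar>r + \<phi>\<bar>" using ra rpos by simp
    have ay: "\<bar>?y\<bar> = \<bar>r + \<phi>\<bar> / (4 * real n)" using np by (simp add: abs_divide)
    have ypos: "0 < \<bar>?y\<bar>" using ay rpos np by simp
    have s: "\<bar>?y\<bar> \<le> \<bar>sin (pi * ?y)\<bar>" by (rule abs_le_abs_sin_pi[OF yb])
    then have sne: "sin (pi * ?y) \<noteq> 0" using ypos by auto
    have b1: "norm (wave_sum {p..q} ?y) \<le> 1 / \<bar>sin (pi * ?y)\<bar>" by (rule norm_wave_sum_le_inverse_sin[OF sne])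
    have sp: "0 < \<bar>sin (pi * ?y)\<bar>" using s ypos by linarith
    have b2: "1 / \<bar>sin (pi * ?y)\<bar> \<le> 1 / \<bar>?y\<bar>"
      by (rule divide_left_mono[OF s], simp, rule mult_pos_pos[OF sp ypos])
    have b3: "1 / \<bar>?y\<bar> = 4 * real n / \<bar>r + \<phi>\<bar>" unfolding ay using np rpos by simp
    have b4: "4 * real n / \<bar>r + \<phi>\<bar> \<le> 4 * real n / max 1 (\<bar>real_of_int r\<bar> - 1)"
      using m1 np by (intro divide_left_mono) auto
    show ?thesis using b1 b2 b3 b4 by linarith
  qed
qed

lemma harm_le_1_plus_ln: "n \<ge> 1 \<Longrightarrow> (harm n :: real) \<le> 1 + ln (real n)"
  using euler_mascheroni_sequence_decreasing[of 1 n] by (simp add: harm_def)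

lemma sum_inverse_Suc_eq_harm: "(\<Sum>v\<le>M. 1 / (real v + 1)) = (harm (Suc M) :: real)"
  by (simp add: harm_altdef lessThan_Suc_atMost inverse_eq_divide add.commute)

lemma sum_inverse_max_le:
  "(\<Sum>v\<le>M. 1 / max 1 (real v - 1)) \<le> 3 * (1 + ln (real M + 1))"
proof -
  have "(\<Sum>v\<le>M. 1 / max 1 (real v - 1)) \<le> (\<Sum>v\<le>M. 3 * (1 / (real v + 1)))"
  proof (rule sum_mono)
    fix v assume "v \<in> {..M}"
    show "1 / max 1 (real v - 1) \<le> 3 * (1 / (real v + 1))"
    proof (cases "real v - 1 \<le> 1")
      case True
      then have "real v \<le> 2" by simp
      then show ?thesis using True by (simp add: field_simps)
    next
      case False
      then show ?thesis by (simp add: field_simps)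
    qed
  qed
  also have "\<dots> = 3 * (\<Sum>v\<le>M. 1 / (real v + 1))" by (rule sum_distrib_left[symmetric])
  also have "\<dots> = 3 * harm (Suc M)" by (simp only: sum_inverse_Suc_eq_harm)
  also have "\<dots> \<le> 3 * (1 + ln (real M + 1))"
  proof -
    have h: "(harm (Suc M)::real) \<le> 1 + ln (real M + 1)"
      using harm_le_1_plus_ln[of "Suc M"] by (simp add: add.commute)
    then show ?thesis using mult_left_mono[OF h, of 3] by simp
  qed
  finally show ?thesis .
qed

lemma sum_abs_shift_le:
  fixes f :: "nat \<Rightarrow> real"
  assumes "\<And>v. 0 \<le> f v"
  shows "(\<Sum>t<4*n. f (nat \<bar>int t - 2 * int n\<bar>)) \<le> 2 * (\<Sum>v\<le>2*n. f v)"
proof -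
  have sp: "(\<Sum>t<4*n. f (nat \<bar>int t - 2 * int n\<bar>)) = (\<Sum>t<2*n. f (2*n - t)) + (\<Sum>t<2*n. f t)"
  proof -
    have "(\<Sum>t<4*n. f (nat \<bar>int t - 2 * int n\<bar>)) = (\<Sum>t<2*n + 2*n. f (nat \<bar>int t - 2 * int n\<bar>))" by simp
    also have "\<dots> = (\<Sum>t<2*n. f (nat \<bar>int t - 2 * int n\<bar>)) + (\<Sum>t<2*n. f (nat \<bar>int (2*n + t) - 2 * int n\<bar>))"
      by (rule sum_lessThan_add)
    also have "(\<Sum>t<2*n. f (nat \<bar>int t - 2 * int n\<bar>)) = (\<Sum>t<2*n. f (2*n - t))"
    proof (rule sum.cong[OF refl])
      fix t assume "t \<in> {..<2*n}"
      then have "nat \<bar>int t - 2 * int n\<bar> = 2*n - t" by auto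
      then show "f (nat \<bar>int t - 2 * int n\<bar>) = f (2*n - t)" by (rule arg_cong[where f = f])
    qed
    finally show ?thesis by simp
  qed
  have a: "(\<Sum>t<2*n. f (2*n - t)) \<le> (\<Sum>v\<le>2*n. f v)"
  proof -
    have "(\<Sum>t<2*n. f (2*n - t)) = (\<Sum>v\<in>(\<lambda>t. 2*n - t) ` {..<2*n}. f v)"
      by (rule sum.reindex[symmetric, unfolded o_def]) (auto simp: inj_on_def)
    also have "\<dots> \<le> (\<Sum>v\<le>2*n. f v)" by (rule sum_mono2) (auto simp: assms)
    finally show ?thesis .
  qed
  have b: "(\<Sum>t<2*n. f t) \<le> (\<Sum>v\<le>2*n. f v)" by (rule sum_mono2) (auto simp: assms)
  show ?thesis using sp a b by simp
qed

lemma sum_periodic_shift: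
  fixes G :: "int \<Rightarrow> real"
  assumes per: "\<And>r. G (r + int N) = G r"
  shows "(\<Sum>t<N. G (b + int t)) = (\<Sum>t<N. G (c + int t))"
proof -
  have step: "(\<Sum>t<N. G (b + 1 + int t)) = (\<Sum>t<N. G (b + int t))" for b
  proof -
    have "(\<Sum>t<N. G (b + 1 + int t)) + G b = (\<Sum>t<Suc N. G (b + int t))"
      by (subst sum.lessThan_Suc_shift) (simp add: add.commute add.left_commute)
    also have "\<dots> = (\<Sum>t<N. G (b + int t)) + G (b + int N)" by simp
    finally show ?thesis using per[of b] by simp
  qed
  have all: "(\<Sum>t<N. G (b + int t)) = (\<Sum>t<N. G (int t))" for b
  proof (induction b rule: int_induct[where k = 0])
    case base then show ?case by simp
  next
    case (step1 i) then show ?case using step[of i] by simp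
  next
    case (step2 i) then show ?case using step[of "i - 1"] by simp
  qed
  show ?thesis using all[of b] all[of c] by simp
qed

lemma sum_norm_wave_sum_period_le:
  assumes n: "n \<ge> 1" and pq: "0 \<le> p" "q \<le> int n" and ph: "0 \<le> \<phi>" "\<phi> < 1"
  shows "(\<Sum>t<4*n. norm (wave_sum {p..q} ((real_of_int (- 2 * int n + int t) + \<phi>) / (4 * real n))))
         \<le> 24 * real n * (3 + ln (real n))"
proof -
  have "(\<Sum>t<4*n. norm (wave_sum {p..q} ((real_of_int (- 2 * int n + int t) + \<phi>) / (4 * real n))))
      \<le> (\<Sum>t<4*n. 4 * real n * (1 / max 1 (real (nat \<bar>int t - 2 * int n\<bar>) - 1)))"
  proof (rule sum_mono)
    fix t assume t: "t \<in> {..<4*n}"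
    have "\<bar>real_of_int (- 2 * int n + int t)\<bar> = real (nat \<bar>int t - 2 * int n\<bar>)" by simp
    then show "norm (wave_sum {p..q} ((real_of_int (- 2 * int n + int t) + \<phi>) / (4 * real n)))
        \<le> 4 * real n * (1 / max 1 (real (nat \<bar>int t - 2 * int n\<bar>) - 1))"
      using norm_wave_sum_grid_le[OF n pq, of "- 2 * int n + int t"] t ph by simp
  qed
  also have "\<dots> = 4 * real n * (\<Sum>t<4*n. (1 / max 1 (real (nat \<bar>int t - 2 * int n\<bar>) - 1)))"
    by (simp add: sum_distrib_left)
  also have "\<dots> \<le> 4 * real n * (2 * (\<Sum>v\<le>2*n. 1 / max 1 (real v - 1)))"
    by (intro mult_left_mono sum_abs_shift_le[where f = "\<lambda>v. 1 / max 1 (real v - 1)"]) auto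
  also have "\<dots> \<le> 4 * real n * (2 * (3 * (1 + ln (real (2*n) + 1))))"
    by (intro mult_left_mono sum_inverse_max_le) auto
  also have "\<dots> \<le> 24 * real n * (3 + ln (real n))"
  proof -
    have "ln (real (2*n) + 1) \<le> ln (3 * real n)" using n by (intro ln_mono) auto
    also have "\<dots> = ln 3 + ln (real n)" using n by (simp add: ln_mult)
    also have "ln (3::real) \<le> 2" using ln_le_minus_one[of 3] by simp
    finally have "1 + ln (real (2*n) + 1) \<le> 3 + ln (real n)" by simp
    from mult_left_mono[OF this, of "24 * real n"] show ?thesis by (simp add: algebra_simps)
  qed
  finally show ?thesis .
qed

text \<open>The grid points \<open>\<theta> - y/(4n)\<close>, \<open>|y| \<le> 4n\<close>, cover two periods of \<open>wave_sum\<close> plus one point;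
  within a period the Dirichlet bound \<open>1/|sin|\<close> gives a harmonic sum.\<close>

lemma sum_norm_wave_sum_grid_le:
  assumes n: "n \<ge> 1" and pq: "0 \<le> p" "q \<le> int n"
  shows "(\<Sum>y\<in>{-4 * int n..4 * int n}. norm (wave_sum {p..q} (\<theta> - real_of_int y / (4 * real n))))
         \<le> 150 * real n * (1 + ln (real n))"
proof -
  define N where "N = 4 * n"
  define m where "m = \<lfloor>4 * real n * \<theta>\<rfloor>"
  define \<phi> where "\<phi> = 4 * real n * \<theta> - m"
  have ph: "0 \<le> \<phi>" "\<phi> < 1" unfolding \<phi>_def m_def by linarith+
  define G where "G r = norm (wave_sum {p..q} ((real_of_int r + \<phi>) / (4 * real n)))" for r
  have per: "G (r + int N) = G r" for r
  proof -
    have "(real_of_int (r + int N) + \<phi>) / (4 * real n) = (real_of_int r + \<phi>) / (4 * real n) + of_int 1"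
      using n by (simp add: N_def field_simps)
    then show ?thesis unfolding G_def by (simp only: wave_sum_periodic)
  qed
  have "\<theta> - real_of_int y / (4 * real n) = (real_of_int (m - y) + \<phi>) / (4 * real n)" for y
    using n unfolding \<phi>_def by (simp add: field_simps)
  then have "(\<Sum>y\<in>{-4 * int n..4 * int n}. norm (wave_sum {p..q} (\<theta> - real_of_int y / (4 * real n))))
      = (\<Sum>y\<in>{- int N..int N}. G (m - y))"
    by (simp add: G_def N_def)
  also have "\<dots> = (\<Sum>t<N + (N + 1). G ((m - int N) + int t))"
    by (rule sum.reindex_bij_witness[of _ "\<lambda>t. int N - int t" "\<lambda>y. nat (int N - y)"]) auto
  also have "\<dots> = (\<Sum>t<N. G ((m - int N) + int t)) + (\<Sum>t<N. G (m + int t))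
        + G ((m - int N) + int (N + N))"
    by (simp add: sum_lessThan_add algebra_simps)
  also have "\<dots> = 2 * (\<Sum>t<N. G (- 2 * int n + int t)) + G ((m - int N) + int (N + N))"
    using sum_periodic_shift[of G N, OF per] by (metis mult_2)
  also have "\<dots> \<le> 2 * (24 * real n * (3 + ln (real n))) + (real n + 1)"
    using sum_norm_wave_sum_period_le[OF n pq ph] norm_wave_sum_le_card[OF pq]
    unfolding G_def N_def by (intro add_mono) auto
  also have "\<dots> = 145 * real n + 48 * (real n * ln (real n)) + 1"
    by (simp add: algebra_simps)
  also have "\<dots> \<le> 150 * real n + 150 * (real n * ln (real n))"
  proof -
    have "0 \<le> real n * ln (real n)" using n by simp
    then show ?thesis using n by linarith
  qed
  also have "\<dots> = 150 * real n * (1 + ln (real n))"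
    by (simp add: algebra_simps)
  finally show ?thesis .
qed

section \<open>Lattice sums of the kernels\<close>

text \<open>On \<open>HH\<close> the projection to three coordinates is injective.\<close>

lemma sum_HH_box_product_le:
  fixes g1 g2 g3 :: "int \<Rightarrow> real"
  assumes d: "distinct [p1,p2,p3]" and J: "J \<subseteq> HH_box n"
    and g: "\<And>y. 0 \<le> g1 y" "\<And>y. 0 \<le> g2 y" "\<And>y. 0 \<le> g3 y"
  shows "(\<Sum>j\<in>J. g1 (j$p1) * g2 (j$p2) * g3 (j$p3)) \<le>
     (\<Sum>y\<in>{-4 * int n..4 * int n}. g1 y) * (\<Sum>y\<in>{-4 * int n..4 * int n}. g2 y)
       * (\<Sum>y\<in>{-4 * int n..4 * int n}. g3 y)"
proof -
  obtain w where dw: "distinct [p1,p2,p3,w]" using exists_fourth_index[OF d] by blast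
  let ?B = "{-4 * int n..4 * int n}"
  let ?\<pi> = "\<lambda>j::int^4. (j$p1, j$p2, j$p3)"
  let ?h = "\<lambda>x::int \<times> int \<times> int. g1 (fst x) * g2 (fst (snd x)) * g3 (snd (snd x))"
  have inj: "inj_on ?\<pi> J"
  proof (rule inj_onI)
    fix j j' assume jj: "j \<in> J" "j' \<in> J" "?\<pi> j = ?\<pi> j'"
    have sum0: "x$p1 + x$p2 + x$p3 + x$w = 0" if "x \<in> J" for x
      using that J sum_UNIV_4_distinct[OF dw, of "\<lambda>i. x$i"] by (auto simp: HH_box_def HH_iff)
    have "j$p1 = j'$p1" "j$p2 = j'$p2" "j$p3 = j'$p3" using jj(3) by auto
    moreover have "j$w = j'$w" using sum0[OF jj(1)] sum0[OF jj(2)] calculation by linarith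
    ultimately show "j = j'" unfolding vec_eq_iff all_4_distinct[OF dw] by simp
  qed
  have "?\<pi> ` J \<subseteq> ?B \<times> ?B \<times> ?B" using J HH_box_coord_bound by blast
  then have "(\<Sum>x\<in>?\<pi> ` J. ?h x) \<le> (\<Sum>x\<in>?B \<times> ?B \<times> ?B. ?h x)"
    using g by (intro sum_mono2) auto
  also have "\<dots> = (\<Sum>y\<in>?B. g1 y) * (\<Sum>y\<in>?B. g2 y) * (\<Sum>y\<in>?B. g3 y)"
    by (rule sum_product_3) auto
  finally show ?thesis by (simp add: sum.reindex[OF inj])
qed

lemma sum_norm_wave_sum_triple_le:
  fixes t :: "real^4"
  assumes n: "n \<ge> 1" and d: "distinct [a,b,c]" and \<tau>: "\<tau> permutes UNIV" and J: "J \<subseteq> HH_box n"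
    and I: "0 \<le> pa" "qa \<le> int n" "0 \<le> pb" "qb \<le> int n" "0 \<le> pc" "qc \<le> int n"
  shows "(\<Sum>j\<in>J. norm (wave_sum {pa..qa} (t$(\<sigma> a) - real_of_int (j$(\<tau> a)) / (4 * real n)))
            * norm (wave_sum {pb..qb} (t$(\<sigma> b) - real_of_int (j$(\<tau> b)) / (4 * real n)))
            * norm (wave_sum {pc..qc} (t$(\<sigma> c) - real_of_int (j$(\<tau> c)) / (4 * real n))))
         \<le> (150 * real n * (1 + ln (real n))) ^ 3"
proof -
  have d': "distinct [\<tau> a, \<tau> b, \<tau> c]" using d permutes_inj[OF \<tau>] by (auto simp: inj_eq)
  let ?B = "{-4 * int n..4 * int n}"
  have "(\<Sum>j\<in>J. norm (wave_sum {pa..qa} (t$(\<sigma> a) - real_of_int (j$(\<tau> a)) / (4 * real n)))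
            * norm (wave_sum {pb..qb} (t$(\<sigma> b) - real_of_int (j$(\<tau> b)) / (4 * real n)))
            * norm (wave_sum {pc..qc} (t$(\<sigma> c) - real_of_int (j$(\<tau> c)) / (4 * real n))))
     \<le> (\<Sum>y\<in>?B. norm (wave_sum {pa..qa} (t$(\<sigma> a) - real_of_int y / (4 * real n))))
     * (\<Sum>y\<in>?B. norm (wave_sum {pb..qb} (t$(\<sigma> b) - real_of_int y / (4 * real n))))
     * (\<Sum>y\<in>?B. norm (wave_sum {pc..qc} (t$(\<sigma> c) - real_of_int y / (4 * real n))))"
    by (rule sum_HH_box_product_le[OF d' J]) auto
  also have "\<dots> \<le> (150 * real n * (1 + ln (real n))) ^ 3"
    unfolding power3_eq_cube
    by (intro mult_mono sum_norm_wave_sum_grid_le[OF n] sum_nonneg mult_nonneg_nonneg) (use I n in auto)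
  finally show ?thesis .
qed

lemma sum_permv_diff_scalept_eq_0:
  assumes t: "t \<in> triH" and j: "j \<in> HH" and \<sigma>: "\<sigma> permutes UNIV" and \<tau>: "\<tau> permutes UNIV"
  shows "sum (\<lambda>i. (permv \<sigma> t - permv \<tau> (scalept n j)) $ i) UNIV = 0"
proof -
  have "sum (\<lambda>i. t $ \<sigma> i) UNIV = sum (\<lambda>i. t $ i) UNIV"
    using sum.permute[OF \<sigma>, of "\<lambda>i. t $ i"] by (simp add: o_def)
  also have "\<dots> = 0" using t by (simp add: triH_def sum_4)
  finally have st: "sum (\<lambda>i. t $ \<sigma> i) UNIV = 0" .
  have "sum (\<lambda>i. j $ \<tau> i) UNIV = sum (\<lambda>i. j $ i) UNIV"
    using sum.permute[OF \<tau>, of "\<lambda>i. j $ i"] by (simp add: o_def)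
  also have "\<dots> = 0" using j by (simp add: HH_iff)
  finally have "sum (\<lambda>i. j $ \<tau> i) UNIV = 0" .
  moreover have "sum (\<lambda>i. real_of_int (j $ \<tau> i) / (4 * real n)) UNIV
      = real_of_int (sum (\<lambda>i. j $ \<tau> i) UNIV) / (4 * real n)"
    by (simp add: sum_divide_distrib)
  ultimately show ?thesis using st by (simp add: scalept_def sum_subtractf)
qed

lemma sum_norm_tile_kernel_le:
  fixes t :: "real^4"
  assumes n: "n \<ge> 1" and t: "t \<in> triH" and \<sigma>: "\<sigma> permutes UNIV" and \<tau>: "\<tau> permutes UNIV"
    and J: "J \<subseteq> HH_box n"
    and P: "\<And>d. P (4*d) \<longleftrightarrow> d \<in> {pP..qP}" "0 \<le> pP" "qP \<le> int n"
    and Q: "\<And>d. Q (4*d) \<longleftrightarrow> d \<in> {pQ..qQ}" "0 \<le> pQ" "qQ \<le> int n"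
  shows "(\<Sum>j\<in>J. norm (\<Sum>k\<in>HH_box n. of_real (tile P Q k) * phi k (permv \<sigma> t - permv \<tau> (scalept n j))))
          \<le> 4 * (150 * real n * (1 + ln (real n))) ^ 3"
proof -
  let ?x = "\<lambda>j a. t$(\<sigma> a) - real_of_int (j$(\<tau> a)) / (4 * real n)"
  let ?NP = "\<lambda>j a. norm (wave_sum {pP..qP} (?x j a))"
  let ?NQ = "\<lambda>j a. norm (wave_sum {pQ..qQ} (?x j a))"
  have comp: "(permv \<sigma> t - permv \<tau> (scalept n j)) $ a = ?x j a" for j a
    by (simp add: scalept_def)
  have pt: "norm (\<Sum>k\<in>HH_box n. of_real (tile P Q k) * phi k (permv \<sigma> t - permv \<tau> (scalept n j)))
       \<le> ?NP j 2 * ?NP j 3 * ?NP j 4 + ?NQ j 1 * ?NP j 3 * ?NP j 4 + ?NQ j 1 * ?NQ j 2 * ?NP j 4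
         + ?NQ j 1 * ?NQ j 2 * ?NQ j 3" if "j \<in> J" for j
  proof -
    have su: "sum (\<lambda>i. (permv \<sigma> t - permv \<tau> (scalept n j)) $ i) UNIV = 0"
      using sum_permv_diff_scalept_eq_0[OF t _ \<sigma> \<tau>] that J by (auto simp: HH_box_def)
    have sub: "{pP..qP} \<subseteq> {0..int n}" "{pQ..qQ} \<subseteq> {0..int n}" using P Q by auto
    show ?thesis
      unfolding sum_tile_phi[OF su P(1) sub(1) Q(1) sub(2)] comp
      by (rule order_trans[OF norm_triangle_le[OF order_refl]]
          | rule order_trans[OF norm_triangle_ineq] add_mono | simp add: norm_mult)+
  qed
  have "(\<Sum>j\<in>J. norm (\<Sum>k\<in>HH_box n. of_real (tile P Q k) * phi k (permv \<sigma> t - permv \<tau> (scalept n j))))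
      \<le> (\<Sum>j\<in>J. ?NP j 2 * ?NP j 3 * ?NP j 4) + (\<Sum>j\<in>J. ?NQ j 1 * ?NP j 3 * ?NP j 4)
      + (\<Sum>j\<in>J. ?NQ j 1 * ?NQ j 2 * ?NP j 4) + (\<Sum>j\<in>J. ?NQ j 1 * ?NQ j 2 * ?NQ j 3)"
    using sum_mono[OF pt] by (simp add: sum.distrib)
  also have "\<dots> \<le> (150 * real n * (1 + ln (real n))) ^ 3 + (150 * real n * (1 + ln (real n))) ^ 3
      + (150 * real n * (1 + ln (real n))) ^ 3 + (150 * real n * (1 + ln (real n))) ^ 3"
    using neq_4 by (intro add_mono sum_norm_wave_sum_triple_le[OF n _ \<tau> J]) (use P Q in auto)
  finally show ?thesis by simp
qed

lemma scalept_in_triH: "n \<ge> 1 \<Longrightarrow> j \<in> Lam n \<Longrightarrow> scalept n j \<in> triH"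
proof -
  assume n: "n \<ge> 1" and j: "j \<in> Lam n"
  then have o: "j$4 \<le> j$3" "j$3 \<le> j$2" "j$2 \<le> j$1" "j$1 \<le> j$4 + 4 * int n"
    and s: "j$1 + j$2 + j$3 + j$4 = 0"
    by (auto simp: Lam_def HH_def)
  have np: "(0::real) < 4 * real n" using n by simp
  have d: "real_of_int (j$p) / (4 * real n) - real_of_int (j$q) / (4 * real n) \<in> {0..1}"
    if "j$q \<le> j$p" "j$p \<le> j$q + 4 * int n" for p q
  proof -
    have "real_of_int (j$p) / (4 * real n) - real_of_int (j$q) / (4 * real n)
        = real_of_int (j$p - j$q) / (4 * real n)" by (simp add: diff_divide_distrib)
    moreover have "0 \<le> real_of_int (j$p - j$q)" "real_of_int (j$p - j$q) \<le> 4 * real n"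
      using that by linarith+
    ultimately show ?thesis using np by (simp add: divide_le_eq)
  qed
  have "real_of_int (j$1) / (4 * real n) + real_of_int (j$2) / (4 * real n)
        + real_of_int (j$3) / (4 * real n) + real_of_int (j$4) / (4 * real n) = 0"
    using s by (simp flip: add_divide_distrib of_int_add)
  moreover have "j$2 \<le> j$1" "j$1 \<le> j$2 + 4 * int n" "j$3 \<le> j$2" "j$2 \<le> j$3 + 4 * int n"
    "j$4 \<le> j$3" "j$3 \<le> j$4 + 4 * int n" "j$4 \<le> j$1" "j$1 \<le> j$4 + 4 * int n"
    using o by linarith+
  ultimately show ?thesis
    unfolding triH_def scalept_def using d by (simp del: atLeastAtMost_iff)
qed

lemma norm_sum_mult_double_sum_le:
  fixes f :: "'a \<Rightarrow> complex" and e :: "'b \<Rightarrow> 'b \<Rightarrow> complex"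
  assumes "finite J"
    and f: "\<And>j. j \<in> J \<Longrightarrow> norm (f j) \<le> M" and w: "\<And>j. j \<in> J \<Longrightarrow> 0 \<le> w j \<and> w j \<le> W"
    and e: "\<And>\<sigma> \<tau>. norm (e \<sigma> \<tau>) \<le> 1"
    and X: "\<And>\<sigma> \<tau>. \<sigma> \<in> P \<Longrightarrow> \<tau> \<in> P \<Longrightarrow> (\<Sum>j\<in>J. norm (X \<sigma> \<tau> j)) \<le> B"
    and "0 \<le> M" "0 \<le> W"
  shows "norm (\<Sum>j\<in>J. f j * of_real (w j) * (\<Sum>\<sigma>\<in>P. \<Sum>\<tau>\<in>P. e \<sigma> \<tau> * X \<sigma> \<tau> j))
    \<le> M * W * (real (card P))\<^sup>2 * B"
proof -
  have "norm (\<Sum>j\<in>J. f j * of_real (w j) * (\<Sum>\<sigma>\<in>P. \<Sum>\<tau>\<in>P. e \<sigma> \<tau> * X \<sigma> \<tau> j))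
      \<le> (\<Sum>j\<in>J. M * W * (\<Sum>\<sigma>\<in>P. \<Sum>\<tau>\<in>P. norm (X \<sigma> \<tau> j)))"
  proof (rule order_trans[OF norm_sum sum_mono])
    fix j assume j: "j \<in> J"
    have "norm (\<Sum>\<sigma>\<in>P. \<Sum>\<tau>\<in>P. e \<sigma> \<tau> * X \<sigma> \<tau> j) \<le> (\<Sum>\<sigma>\<in>P. \<Sum>\<tau>\<in>P. norm (X \<sigma> \<tau> j))"
      by (intro order_trans[OF norm_sum] sum_mono order_trans[OF norm_sum])
         (simp add: norm_mult mult_left_le_one_le e)
    then show "norm (f j * of_real (w j) * (\<Sum>\<sigma>\<in>P. \<Sum>\<tau>\<in>P. e \<sigma> \<tau> * X \<sigma> \<tau> j))
        \<le> M * W * (\<Sum>\<sigma>\<in>P. \<Sum>\<tau>\<in>P. norm (X \<sigma> \<tau> j))"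
      using f[OF j] w[OF j] \<open>0 \<le> M\<close> unfolding norm_mult
      by (intro mult_mono) (auto intro: sum_nonneg)
  qed
  also have "\<dots> = M * W * (\<Sum>\<sigma>\<in>P. \<Sum>\<tau>\<in>P. \<Sum>j\<in>J. norm (X \<sigma> \<tau> j))"
    by (simp add: sum_distrib_left sum.swap[of _ J])
  also have "\<dots> \<le> M * W * (\<Sum>\<sigma>\<in>P. \<Sum>\<tau>\<in>P. B)"
    using X \<open>0 \<le> M\<close> \<open>0 \<le> W\<close> by (intro mult_left_mono sum_mono) auto
  finally show ?thesis by (simp add: power2_eq_square mult_ac)
qed

lemma kernel_LL_expand:
  "(\<Sum>k\<in>Lam_int n. TS k t * cnj (TS k s)) = (1/13824) *
     (\<Sum>\<sigma>\<in>{\<sigma>. \<sigma> permutes UNIV}. \<Sum>\<tau>\<in>{\<tau>. \<tau> permutes UNIV}. (of_int (sign \<sigma>) * of_int (sign \<tau>)) *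
        (\<Sum>k\<in>HH_box n. of_real (tile_open n k) * phi k (permv \<sigma> t - permv \<tau> s)))"
proof -
  let ?P = "{\<sigma>. \<sigma> permutes (UNIV::4 set)}"
  have "(\<Sum>k\<in>Lam_int n. TS k t * cnj (TS k s)) = (1/24) * (\<Sum>k\<in>HH_box n. of_real (tile_open n k) *
      ((1/576) * (\<Sum>\<sigma>\<in>?P. \<Sum>\<tau>\<in>?P. (of_int (sign \<sigma>) * of_int (sign \<tau>)) * phi k (permv \<sigma> t - permv \<tau> s))))"
    by (subst kernel_LL_tiled) (simp only: TS_mult_cnj)
  also have "\<dots> = (1/13824) * (\<Sum>k\<in>HH_box n. \<Sum>\<sigma>\<in>?P. \<Sum>\<tau>\<in>?P. (of_int (sign \<sigma>) * of_int (sign \<tau>)) *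
      (of_real (tile_open n k) * phi k (permv \<sigma> t - permv \<tau> s)))"
    by (simp add: sum_distrib_left mult.assoc mult.left_commute)
  also have "\<dots> = (1/13824) * (\<Sum>\<sigma>\<in>?P. \<Sum>\<tau>\<in>?P. \<Sum>k\<in>HH_box n. (of_int (sign \<sigma>) * of_int (sign \<tau>)) *
      (of_real (tile_open n k) * phi k (permv \<sigma> t - permv \<tau> s)))"
    by (subst sum.swap, subst (2) sum.swap) (rule refl)
  finally show ?thesis by (simp add: sum_distrib_left)
qed

lemma kernel_LLstar_expand:
  assumes "n \<ge> 1"
  shows "(\<Sum>k\<in>Lam n. of_real (lam n k) * TC k t * cnj (TC k s)) = (1/576) *
     (\<Sum>\<sigma>\<in>{\<sigma>. \<sigma> permutes UNIV}. \<Sum>\<tau>\<in>{\<tau>. \<tau> permutes UNIV}.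
        (\<Sum>k\<in>HH_box n. of_real (tile_closed n k) * phi k (permv \<sigma> t - permv \<tau> s)))"
proof -
  let ?P = "{\<sigma>. \<sigma> permutes (UNIV::4 set)}"
  have "(\<Sum>k\<in>Lam n. of_real (lam n k) * TC k t * cnj (TC k s)) = (\<Sum>k\<in>HH_box n. of_real (tile_closed n k) *
      ((1/576) * (\<Sum>\<sigma>\<in>?P. \<Sum>\<tau>\<in>?P. phi k (permv \<sigma> t - permv \<tau> s))))"
    by (subst kernel_LLstar_tiled[OF assms]) (simp only: TC_mult_cnj)
  also have "\<dots> = (1/576) * (\<Sum>k\<in>HH_box n. \<Sum>\<sigma>\<in>?P. \<Sum>\<tau>\<in>?P.
      of_real (tile_closed n k) * phi k (permv \<sigma> t - permv \<tau> s))"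
    by (simp add: sum_distrib_left mult.assoc mult.left_commute)
  also have "\<dots> = (1/576) * (\<Sum>\<sigma>\<in>?P. \<Sum>\<tau>\<in>?P. \<Sum>k\<in>HH_box n.
      of_real (tile_closed n k) * phi k (permv \<sigma> t - permv \<tau> s))"
    by (subst sum.swap, subst (2) sum.swap) (rule refl)
  finally show ?thesis by simp
qed

lemma norm_LL_le:
  assumes n: "n \<ge> 1" and t: "t \<in> triH" and f: "\<forall>s\<in>triH. norm (f s) \<le> M"
  shows "norm (LL n f t) \<le> 24 * (150 * real n * (1 + ln (real n))) ^ 3 / real n ^ 3 * M"
proof -
  let ?P = "{\<sigma>. \<sigma> permutes (UNIV::4 set)}"
  let ?X = "\<lambda>\<sigma> \<tau> j. \<Sum>k\<in>HH_box n. of_real (tile_open n k) * phi k (permv \<sigma> t - permv \<tau> (scalept n j))"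
  have J: "Lam_int n \<subseteq> HH_box n" using Lam_int_subset_Lam Lam_subset_HH_box by blast
  have "LL n f t = (\<Sum>j\<in>Lam_int n. f (scalept n j) * of_real (1 / (96 * real n ^ 3)) *
      (\<Sum>\<sigma>\<in>?P. \<Sum>\<tau>\<in>?P. (of_int (sign \<sigma>) * of_int (sign \<tau>)) * ?X \<sigma> \<tau> j))"
    unfolding LL_def kernel_LL_expand using n by (intro sum.cong refl) (simp add: field_simps)
  also have "norm \<dots> \<le> M * (1 / (96 * real n ^ 3)) * (real (card ?P))\<^sup>2
      * (4 * (150 * real n * (1 + ln (real n))) ^ 3)"
  proof (rule norm_sum_mult_double_sum_le)
    show "finite (Lam_int n)" using J finite_HH_box by (rule finite_subset)
    show "norm (f (scalept n j)) \<le> M" if "j \<in> Lam_int n" for j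
      using f scalept_in_triH[OF n] Lam_int_subset_Lam that by blast
    show "(\<Sum>j\<in>Lam_int n. norm (?X \<sigma> \<tau> j)) \<le> 4 * (150 * real n * (1 + ln (real n))) ^ 3"
      if "\<sigma> \<in> ?P" "\<tau> \<in> ?P" for \<sigma> \<tau>
      unfolding tile_open_def using that
      by (intro sum_norm_tile_kernel_le[OF n t _ _ J, where pP = 0 and qP = "int n - 1"
            and pQ = 1 and qQ = "int n - 1"]) auto
    show "0 \<le> M" using f t by (meson norm_ge_zero order_trans)
  qed (auto simp: sign_def norm_mult)
  also have "\<dots> = 24 * (150 * real n * (1 + ln (real n))) ^ 3 / real n ^ 3 * M"
    by (simp add: card_permutations_4)
  finally show ?thesis .
qed

lemma norm_LLstar_le:
  assumes n: "n \<ge> 1" and t: "t \<in> triH" and f: "\<forall>s\<in>triH. norm (f s) \<le> M"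
  shows "norm (LLstar n f t) \<le> 24 * (150 * real n * (1 + ln (real n))) ^ 3 / real n ^ 3 * M"
proof -
  let ?P = "{\<sigma>. \<sigma> permutes (UNIV::4 set)}"
  let ?X = "\<lambda>\<sigma> \<tau> j. \<Sum>k\<in>HH_box n. of_real (tile_closed n k) * phi k (permv \<sigma> t - permv \<tau> (scalept n j))"
  have "LLstar n f t = (\<Sum>j\<in>Lam n. f (scalept n j) * of_real (lam n j / (2304 * real n ^ 3)) *
      (\<Sum>\<sigma>\<in>?P. \<Sum>\<tau>\<in>?P. 1 * ?X \<sigma> \<tau> j))"
    unfolding LLstar_def kernel_LLstar_expand[OF n] using n by (intro sum.cong refl) (simp add: field_simps)
  also have "norm \<dots> \<le> M * (1 / (96 * real n ^ 3)) * (real (card ?P))\<^sup>2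
      * (4 * (150 * real n * (1 + ln (real n))) ^ 3)"
  proof (rule norm_sum_mult_double_sum_le)
    show "finite (Lam n)" using Lam_subset_HH_box finite_HH_box by (rule finite_subset)
    show "norm (f (scalept n j)) \<le> M" if "j \<in> Lam n" for j
      using f scalept_in_triH[OF n that] by blast
    show "0 \<le> lam n j / (2304 * real n ^ 3) \<and> lam n j / (2304 * real n ^ 3) \<le> 1 / (96 * real n ^ 3)"
      for j using n by (auto simp: lam_def Let_def divide_simps)
    show "(\<Sum>j\<in>Lam n. norm (?X \<sigma> \<tau> j)) \<le> 4 * (150 * real n * (1 + ln (real n))) ^ 3"
      if "\<sigma> \<in> ?P" "\<tau> \<in> ?P" for \<sigma> \<tau>
      unfolding tile_closed_def using that
      by (intro sum_norm_tile_kernel_le[OF n t _ _ Lam_subset_HH_box, where pP = 0 and qP = "int n - 1"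
            and pQ = 1 and qQ = "int n"]) auto
    show "0 \<le> M" using f t by (meson norm_ge_zero order_trans)
  qed auto
  also have "\<dots> = 24 * (150 * real n * (1 + ln (real n))) ^ 3 / real n ^ 3 * M"
    by (simp add: card_permutations_4)
  finally show ?thesis .
qed

lemma one_plus_ln_cube_over_cube_le:
  assumes "n \<ge> 2"
  shows "(150 * real n * (1 + ln (real n))) ^ 3 / real n ^ 3 \<le> 150^3 * 27 * ln (real n) ^ 3"
proof -
  have "ln 2 \<le> ln (real n)" using assms by simp
  then have "2/3 \<le> ln (real n)" using ln2_ge_two_thirds by linarith
  then have "(1 + ln (real n)) ^ 3 \<le> (3 * ln (real n)) ^ 3"
    by (intro power_mono) auto
  then have cube: "(1 + ln (real n)) ^ 3 \<le> 27 * ln (real n) ^ 3"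
    by (simp add: power_mult_distrib)
  have "(150 * real n * (1 + ln (real n))) ^ 3 / real n ^ 3 = 150^3 * (1 + ln (real n)) ^ 3"
    using assms by (simp add: power_mult_distrib)
  also have "\<dots> \<le> 150^3 * (27 * ln (real n) ^ 3)"
    using cube by (rule mult_left_mono) simp
  finally show ?thesis by simp
qed

theorem theorem4p8:
  shows "\<exists>c::real. \<forall>n::nat. n \<ge> 2 \<longrightarrow>
     (\<forall>f::real^4 \<Rightarrow> complex. \<forall>M::real. continuous_on triH f \<longrightarrow>
        (\<forall>s\<in>triH. norm (f s) \<le> M) \<longrightarrow>
        (\<forall>t\<in>triH. norm (LL n f t) \<le> c * (ln (real n))^3 * M \<and>
                   norm (LLstar n f t) \<le> c * (ln (real n))^3 * M))"
proof (intro exI allI impI ballI conjI)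
  fix n :: nat and f :: "real^4 \<Rightarrow> complex" and M t
  assume n: "n \<ge> 2" and f: "\<forall>s\<in>triH. norm (f s) \<le> M" and t: "t \<in> triH"
  have "0 \<le> M" using f t by (meson norm_ge_zero order_trans)
  then have bound: "24 * (150 * real n * (1 + ln (real n))) ^ 3 / real n ^ 3 * M
      \<le> (24 * 150^3 * 27) * ln (real n) ^ 3 * M"
    using one_plus_ln_cube_over_cube_le[OF n] by (intro mult_right_mono) auto
  show "norm (LL n f t) \<le> (24 * 150^3 * 27) * ln (real n) ^ 3 * M"
    using order_trans[OF norm_LL_le[OF _ t f] bound] n by simp
  show "norm (LLstar n f t) \<le> (24 * 150^3 * 27) * ln (real n) ^ 3 * M"
    using order_trans[OF norm_LLstar_le[OF _ t f] bound] n by simp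
qed

end
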